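(* The elements $A^iB^jC^k\alpha^r\beta^s\gamma^t$ with $i,j,k,r,s,t\geq 0$ form a basis for the $\mathbb F$-vector space $\Delta$.
   Context: Let $\mathbb F$ be a field and fix a nonzero $q\in\mathbb F$ with $q^4\neq 1$. The universal Askey--Wilson algebra $\Delta$ is the associative $\mathbb F$-algebra with 1 with generators $A,B,C$ subject to the relations that each of $A+\frac{qBC-q^{-1}CB}{q^2-q^{-2}}$, $B+\frac{qCA-q^{-1}AC}{q^2-q^{-2}}$, $C+\frac{qAB-q^{-1}BA}{q^2-q^{-2}}$ is central; $\alpha,\beta,\gamma$ denote these three central elements (in order) each multiplied by $q+q^{-1}$. *)

theory Defs
  imports Main "HOL-Library.Function_Algebras"
begin

text \<open>Free associative algebra over a field on three generators A, B, C:
  finitely supported functions from words to coefficients, with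
  concatenation (convolution) product.\<close>

datatype gen = GA | GB | GC

type_synonym 'k fa = "gen list \<Rightarrow> 'k"

definition fa_fin :: "('k::zero) fa set" where
  "fa_fin = {f. finite {w. f w \<noteq> 0}}"

definition fa_word :: "gen list \<Rightarrow> ('k::{zero,one}) fa" where
  "fa_word w = (\<lambda>u. if u = w then 1 else 0)"

definition fa_smult :: "'k::times \<Rightarrow> 'k fa \<Rightarrow> 'k fa" where
  "fa_smult c f = (\<lambda>w. c * f w)"

definition fa_mult :: "('k::comm_semiring_1) fa \<Rightarrow> 'k fa \<Rightarrow> 'k fa" where
  "fa_mult f g = (\<lambda>w. \<Sum>i\<le>length w. f (take i w) * g (drop i w))"

fun fa_pow :: "('k::comm_semiring_1) fa \<Rightarrow> nat \<Rightarrow> 'k fa" where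
  "fa_pow f 0 = fa_word []"
| "fa_pow f (Suc n) = fa_mult f (fa_pow f n)"

definition fa_span :: "('k::comm_semiring_1) fa set \<Rightarrow> 'k fa set" where
  "fa_span S = {f. \<exists>T c. finite T \<and> T \<subseteq> S \<and> f = (\<Sum>t\<in>T. fa_smult (c t) t)}"

definition fa_ideal :: "('k::comm_semiring_1) fa set \<Rightarrow> 'k fa set" where
  "fa_ideal S = fa_span {fa_mult (fa_mult (fa_word u) s) (fa_word v) | u s v. s \<in> S}"

definition aw_A :: "('k::{zero,one}) fa" where "aw_A = fa_word [GA]"
definition aw_B :: "('k::{zero,one}) fa" where "aw_B = fa_word [GB]"
definition aw_C :: "('k::{zero,one}) fa" where "aw_C = fa_word [GC]"

definition aw_cent :: "'k::field \<Rightarrow> 'k fa \<Rightarrow> 'k fa \<Rightarrow> 'k fa \<Rightarrow> 'k fa" where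
  "aw_cent q X Y Z = X + fa_smult (inverse (q^2 - (inverse q)^2))
      (fa_smult q (fa_mult Y Z) - fa_smult (inverse q) (fa_mult Z Y))"

definition aw_gA :: "'k::field \<Rightarrow> 'k fa" where "aw_gA q = aw_cent q aw_A aw_B aw_C"
definition aw_gB :: "'k::field \<Rightarrow> 'k fa" where "aw_gB q = aw_cent q aw_B aw_C aw_A"
definition aw_gC :: "'k::field \<Rightarrow> 'k fa" where "aw_gC q = aw_cent q aw_C aw_A aw_B"

definition aw_alpha :: "'k::field \<Rightarrow> 'k fa" where "aw_alpha q = fa_smult (q + inverse q) (aw_gA q)"
definition aw_beta :: "'k::field \<Rightarrow> 'k fa" where "aw_beta q = fa_smult (q + inverse q) (aw_gB q)"
definition aw_gamma :: "'k::field \<Rightarrow> 'k fa" where "aw_gamma q = fa_smult (q + inverse q) (aw_gC q)"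

definition aw_rels :: "'k::field \<Rightarrow> 'k fa set" where
  "aw_rels q = {fa_mult X g - fa_mult g X | X g.
      X \<in> {aw_A, aw_B, aw_C} \<and> g \<in> {aw_gA q, aw_gB q, aw_gC q}}"

definition aw_ideal :: "'k::field \<Rightarrow> 'k fa set" where
  "aw_ideal q = fa_ideal (aw_rels q)"

fun aw_mon :: "'k::field \<Rightarrow> nat \<times> nat \<times> nat \<times> nat \<times> nat \<times> nat \<Rightarrow> 'k fa" where
  "aw_mon q (i, j, k, r, s, t) =
     fa_mult (fa_pow aw_A i) (fa_mult (fa_pow aw_B j) (fa_mult (fa_pow aw_C k)
       (fa_mult (fa_pow (aw_alpha q) r) (fa_mult (fa_pow (aw_beta q) s) (fa_pow (aw_gamma q) t)))))"

definition quotient_basis :: "('k::field) fa set \<Rightarrow> ('i \<Rightarrow> 'k fa) \<Rightarrow> bool" where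
  "quotient_basis I b \<longleftrightarrow>
     (\<forall>f\<in>fa_fin. \<exists>M c. finite M \<and> f - (\<Sum>m\<in>M. fa_smult (c m) (b m)) \<in> I) \<and>
     (\<forall>M c. finite M \<and> (\<Sum>m\<in>M. fa_smult (c m) (b m)) \<in> I \<longrightarrow> (\<forall>m\<in>M. c m = 0))"

end

theory Submission
  imports Defs
begin

text \<open>
  Modulo the ideal, the relation BA = q^2 AB + q(q^2 - q^-2)(C - \<gamma>/(q + q^-1)) and its two
  cyclic companions move A to the left of B and C, and B to the left of C, at the cost of
  terms of lower degree in A, B, C and of central factors. Hence every word is congruent to a
  combination of ordered monomials A^i B^j C^k \<alpha>^r \<beta>^s \<gamma>^t.

  For independence, the same rewriting rules define operators B and C on the vector space V
  with basis e(i, j, k, r, s, t), on which A raises i. These operators satisfy the defining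
  relations, so V is a \<Delta>-module on which \<alpha>, \<beta>, \<gamma> raise r, s, t, and the monomial
  A^i B^j C^k \<alpha>^r \<beta>^s \<gamma>^t sends e(0, ..., 0) to e(i, j, k, r, s, t).
\<close>

definition supp :: "('i \<Rightarrow> 'k::zero) \<Rightarrow> 'i set" where
  "supp v = {m. v m \<noteq> 0}"

definition fin_supp :: "('i \<Rightarrow> 'k::zero) \<Rightarrow> bool" where
  "fin_supp v \<longleftrightarrow> finite (supp v)"

definition smult :: "'k::times \<Rightarrow> ('i \<Rightarrow> 'k) \<Rightarrow> ('i \<Rightarrow> 'k)" where
  "smult c v = (\<lambda>n. c * v n)"

definition unit_vec :: "'i \<Rightarrow> 'i \<Rightarrow> 'k::{zero,one}" where
  "unit_vec m = (\<lambda>n. if n = m then 1 else 0)"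

text \<open>Only meaningful for finitely supported \<open>v\<close>: otherwise the sum is over an infinite
  set and hence \<open>0\<close>.\<close>

definition lin_ext :: "('i \<Rightarrow> 'j \<Rightarrow> 'k::comm_semiring_1) \<Rightarrow> ('i \<Rightarrow> 'k) \<Rightarrow> 'j \<Rightarrow> 'k" where
  "lin_ext f v = (\<lambda>n. \<Sum>m\<in>supp v. v m * f m n)"

lemma smult_apply [simp]: "smult c v n = c * v n"
  by (simp add: smult_def)

lemma smult_zero [simp]: "smult c 0 = (0 :: 'i \<Rightarrow> 'k::mult_zero)"
  by (simp add: smult_def fun_eq_iff)

lemma unit_vec_apply: "unit_vec m n = (if n = m then 1 else 0)"
  by (simp add: unit_vec_def)

lemma sum_apply: "(\<Sum>t\<in>T. g t) n = (\<Sum>t\<in>T. g t n)"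
  by (induction T rule: infinite_finite_induct) auto

lemma fa_smult_eq: "fa_smult = smult"
  by (auto simp: fa_smult_def smult_def fun_eq_iff)

lemma fa_word_eq: "fa_word = unit_vec"
  by (auto simp: fa_word_def unit_vec_def fun_eq_iff)

lemma fa_fin_eq: "fa_fin = {v. fin_supp v}"
  by (auto simp: fa_fin_def fin_supp_def supp_def)

lemma fin_supp_subset: "fin_supp v \<Longrightarrow> supp u \<subseteq> supp v \<union> supp w \<Longrightarrow> fin_supp w \<Longrightarrow> fin_supp u"
  unfolding fin_supp_def by (meson finite_UnI finite_subset)

lemma fin_supp_0 [simp]: "fin_supp 0"
  by (simp add: fin_supp_def supp_def)

lemma fin_supp_unit_vec [simp]: "fin_supp (unit_vec m :: 'i \<Rightarrow> 'k::zero_neq_one)"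
proof -
  have "supp (unit_vec m :: 'i \<Rightarrow> 'k) \<subseteq> {m}" by (auto simp: supp_def unit_vec_def)
  then show ?thesis unfolding fin_supp_def by (rule finite_subset) simp
qed

lemma fin_supp_add [simp]: "fin_supp u \<Longrightarrow> fin_supp v \<Longrightarrow> fin_supp (u + (v :: 'i \<Rightarrow> 'k::monoid_add))"
  by (erule fin_supp_subset) (auto simp: supp_def)

lemma fin_supp_diff [simp]: "fin_supp u \<Longrightarrow> fin_supp v \<Longrightarrow> fin_supp (u - (v :: 'i \<Rightarrow> 'k::group_add))"
  by (erule fin_supp_subset) (auto simp: supp_def)

lemma fin_supp_smult [simp]: "fin_supp v \<Longrightarrow> fin_supp (smult c (v :: 'i \<Rightarrow> 'k::mult_zero))"
  by (erule fin_supp_subset[of _ _ 0]) (auto simp: supp_def)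

lemma fin_supp_sum [simp]:
  "(\<And>t. t \<in> T \<Longrightarrow> fin_supp (g t)) \<Longrightarrow> fin_supp (\<Sum>t\<in>T. (g t :: 'i \<Rightarrow> 'k::comm_monoid_add))"
  by (induction T rule: infinite_finite_induct) auto

lemma lin_ext_eq: "finite S \<Longrightarrow> supp v \<subseteq> S \<Longrightarrow> lin_ext f v = (\<lambda>n. \<Sum>m\<in>S. v m * f m n)"
  unfolding lin_ext_def by (auto intro!: sum.mono_neutral_left simp: supp_def)

lemma lin_ext_as_sum: "lin_ext f v = (\<Sum>m\<in>supp v. smult (v m) (f m))"
  by (simp add: lin_ext_def fun_eq_iff sum_apply)

lemma lin_ext_add: "fin_supp u \<Longrightarrow> fin_supp v \<Longrightarrow> lin_ext f (u + v) = lin_ext f u + lin_ext f v"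
proof -
  assume "fin_supp u" "fin_supp v"
  then have S: "finite (supp u \<union> supp v)" by (simp add: fin_supp_def)
  have "supp (u + v) \<subseteq> supp u \<union> supp v" by (auto simp: supp_def)
  with S show ?thesis
    by (simp add: lin_ext_eq[OF S] fun_eq_iff distrib_right sum.distrib)
qed

lemma lin_ext_smult: "lin_ext f (smult c v) = smult c (lin_ext f (v :: 'i \<Rightarrow> 'k::field))"
proof (cases "c = 0")
  case True
  then show ?thesis by (simp add: lin_ext_def smult_def supp_def)
next
  case False
  then have "supp (smult c v) = supp v" by (auto simp: supp_def)
  then show ?thesis by (simp add: lin_ext_def fun_eq_iff sum_distrib_left mult.assoc)
qed

lemma lin_ext_diff:
  assumes "fin_supp u" "fin_supp v"
  shows "lin_ext f (u - v) = lin_ext f u - lin_ext f (v :: 'i \<Rightarrow> 'k::field)"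
proof -
  have "u - v = u + smult (-1) v" by (simp add: fun_eq_iff)
  then have "lin_ext f (u - v) = lin_ext f (u + smult (-1) v)" by (rule arg_cong)
  also have "\<dots> = lin_ext f u + smult (-1) (lin_ext f v)"
    using assms by (simp add: lin_ext_add lin_ext_smult)
  finally show ?thesis by (simp add: fun_eq_iff)
qed

lemma lin_ext_zero [simp]: "lin_ext f 0 = 0"
  by (simp add: lin_ext_def supp_def fun_eq_iff)

lemma lin_ext_unit_vec [simp]: "lin_ext f (unit_vec m) = (f m :: 'j \<Rightarrow> 'k::comm_semiring_1)"
proof -
  have "lin_ext f (unit_vec m) = (\<lambda>n. \<Sum>p\<in>{m}. unit_vec m p * f p n)"
    by (rule lin_ext_eq) (auto simp: supp_def unit_vec_def)
  then show ?thesis by (simp add: unit_vec_def)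
qed

lemma lin_ext_sum:
  "(\<And>t. t \<in> T \<Longrightarrow> fin_supp (g t)) \<Longrightarrow>
   lin_ext f (\<Sum>t\<in>T. g t) = (\<Sum>t\<in>T. lin_ext f (g t :: 'i \<Rightarrow> 'k::field))"
  by (induction T rule: infinite_finite_induct) (auto simp: lin_ext_add)

lemma supp_lin_ext: "supp (lin_ext f v) \<subseteq> (\<Union>m\<in>supp v. supp (f m))"
proof
  fix n assume "n \<in> supp (lin_ext f v)"
  then have "(\<Sum>m\<in>supp v. v m * f m n) \<noteq> 0" by (simp add: lin_ext_def supp_def)
  then obtain m where "m \<in> supp v" "v m * f m n \<noteq> 0"
    by (meson sum.not_neutral_contains_not_neutral)
  then show "n \<in> (\<Union>m\<in>supp v. supp (f m))" by (auto simp: supp_def)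
qed

lemma fin_supp_lin_ext [simp]:
  "fin_supp v \<Longrightarrow> (\<And>m. m \<in> supp v \<Longrightarrow> fin_supp (f m)) \<Longrightarrow> fin_supp (lin_ext f v)"
  unfolding fin_supp_def using supp_lin_ext[of f v] by (meson finite_UN_I finite_subset)

lemma lin_ext_cong: "(\<And>m. m \<in> supp v \<Longrightarrow> f m = g m) \<Longrightarrow> lin_ext f v = lin_ext g v"
  by (simp add: lin_ext_def)

lemma lin_ext_fadd: "lin_ext (\<lambda>m. f m + g m) v = lin_ext f v + lin_ext g v"
  by (simp add: lin_ext_def fun_eq_iff distrib_left sum.distrib)

lemma lin_ext_fsmult: "lin_ext (\<lambda>m. smult c (f m)) v = smult c (lin_ext f (v :: 'i \<Rightarrow> 'k::field))"
  by (simp add: lin_ext_def fun_eq_iff sum_distrib_left mult.left_commute)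

lemma lin_ext_fdiff: "lin_ext (\<lambda>m. f m - g m) v = lin_ext f v - lin_ext g (v :: 'i \<Rightarrow> 'k::field)"
  by (simp add: lin_ext_def fun_eq_iff right_diff_distrib sum_subtractf)

lemma lin_ext_comp:
  assumes "fin_supp v" "\<And>m. m \<in> supp v \<Longrightarrow> fin_supp (g m)"
  shows "lin_ext f (lin_ext g v) = lin_ext (\<lambda>m. lin_ext f (g m)) (v :: 'i \<Rightarrow> 'k::field)"
proof -
  have "lin_ext f (lin_ext g v) = (\<Sum>m\<in>supp v. lin_ext f (smult (v m) (g m)))"
    unfolding lin_ext_as_sum[of g] by (rule lin_ext_sum) (use assms in auto)
  also have "\<dots> = lin_ext (\<lambda>m. lin_ext f (g m)) v"
    by (simp add: lin_ext_smult lin_ext_as_sum[of "\<lambda>m. lin_ext f (g m)"])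
  finally show ?thesis .
qed

lemma lin_ext_unit_vec_id: "fin_supp v \<Longrightarrow> lin_ext unit_vec v = (v :: 'i \<Rightarrow> 'k::comm_semiring_1)"
proof (rule ext)
  fix n assume v: "fin_supp v"
  have "lin_ext unit_vec v n = (\<Sum>m\<in>supp v \<union> {n}. v m * unit_vec m n)"
    using v by (subst lin_ext_eq[of "supp v \<union> {n}"]) (auto simp: fin_supp_def)
  also have "\<dots> = (\<Sum>m\<in>{n}. v m * unit_vec m n)"
    using v by (intro sum.mono_neutral_right) (auto simp: fin_supp_def unit_vec_def)
  finally show "lin_ext unit_vec v n = v n" by (simp add: unit_vec_def)
qed

section \<open>The module \<open>V\<close>\<close>

text \<open>Basis vectors of \<open>V\<close> are indexed by the exponents \<open>(i, j, k, r, s, t)\<close>.\<close>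

type_synonym idx = "nat \<times> nat \<times> nat \<times> nat \<times> nat \<times> nat"

definition eps :: "'k::field \<Rightarrow> 'k" where
  "eps q = q\<^sup>2 - (inverse q)\<^sup>2"

definition inv_qsum :: "'k::field \<Rightarrow> 'k" where
  "inv_qsum q = inverse (q + inverse q)"

fun abc_deg :: "idx \<Rightarrow> nat" where
  "abc_deg (i, j, k, r, s, t) = i + j + k"

fun matA :: "idx \<Rightarrow> idx \<Rightarrow> 'k::field" where
  "matA (i, j, k, r, s, t) = unit_vec (Suc i, j, k, r, s, t)"

text \<open>The clauses are the relations BA = q^2 AB + q\<epsilon> C - q\<epsilon> \<gamma>/(q + q^-1),
  CA = q^-2 AC - q^-1\<epsilon> B + q^-1\<epsilon> \<beta>/(q + q^-1) and CB = q^2 BC + q\<epsilon> A - q\<epsilon> \<alpha>/(q + q^-1),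
  where \<epsilon> = q^2 - q^-2, applied to the leading letter of a monomial; \<open>bn\<close> and \<open>cn\<close> are the
  current approximations of the matrices of B and C.\<close>

fun stepB :: "'k::field \<Rightarrow> (idx \<Rightarrow> idx \<Rightarrow> 'k) \<Rightarrow> (idx \<Rightarrow> idx \<Rightarrow> 'k) \<Rightarrow> idx \<Rightarrow> idx \<Rightarrow> 'k" where
  "stepB q bn cn (0, j, k, r, s, t) = unit_vec (0, Suc j, k, r, s, t)"
| "stepB q bn cn (Suc i, j, k, r, s, t) =
     smult (q\<^sup>2) (lin_ext matA (bn (i, j, k, r, s, t)))
     + smult (q * eps q) (cn (i, j, k, r, s, t))
     - smult (q * eps q * inv_qsum q) (unit_vec (i, j, k, r, s, Suc t))"

fun stepC :: "'k::field \<Rightarrow> (idx \<Rightarrow> idx \<Rightarrow> 'k) \<Rightarrow> (idx \<Rightarrow> idx \<Rightarrow> 'k) \<Rightarrow> idx \<Rightarrow> idx \<Rightarrow> 'k" where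
  "stepC q bn cn (0, 0, k, r, s, t) = unit_vec (0, 0, Suc k, r, s, t)"
| "stepC q bn cn (0, Suc j, k, r, s, t) =
     smult (q\<^sup>2) (lin_ext bn (cn (0, j, k, r, s, t)))
     + smult (q * eps q) (unit_vec (1, j, k, r, s, t))
     - smult (q * eps q * inv_qsum q) (unit_vec (0, j, k, Suc r, s, t))"
| "stepC q bn cn (Suc i, j, k, r, s, t) =
     smult (inverse q ^ 2) (lin_ext matA (cn (i, j, k, r, s, t)))
     - smult (inverse q * eps q) (bn (i, j, k, r, s, t))
     + smult (inverse q * eps q * inv_qsum q) (unit_vec (i, j, k, r, Suc s, t))"

text \<open>The recursion is nested (the clause for \<open>C\<close> at \<open>(0, j+1, \<dots>)\<close> applies \<open>bn\<close> to vectors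
  of the same degree \<open>i+j+k\<close>), so instead of a terminating function we iterate the step:
  the value at \<open>m\<close> settles after \<open>2 (i+j+k) + 2\<close> rounds.\<close>

primrec approx :: "'k::field \<Rightarrow> nat \<Rightarrow> (idx \<Rightarrow> idx \<Rightarrow> 'k) \<times> (idx \<Rightarrow> idx \<Rightarrow> 'k)" where
  "approx q 0 = (\<lambda>_. 0, \<lambda>_. 0)"
| "approx q (Suc n) = (stepB q (fst (approx q n)) (snd (approx q n)),
                       stepC q (fst (approx q n)) (snd (approx q n)))"

abbreviation "approxB q n \<equiv> fst (approx q n)"
abbreviation "approxC q n \<equiv> snd (approx q n)"

lemma approxB_Suc: "approxB q (Suc n) = stepB q (approxB q n) (approxC q n)"
  by simp

lemma approxC_Suc: "approxC q (Suc n) = stepC q (approxB q n) (approxC q n)"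
  by simp

declare approx.simps(2) [simp del]

lemma fin_supp_matA [simp]: "fin_supp (matA m)"
  by (cases m) auto

lemma fin_supp_approx: "fin_supp (approxB q n m) \<and> fin_supp (approxC q n m)"
proof (induction n arbitrary: m)
  case (Suc n)
  obtain i j k r s t where m: "m = (i, j, k, r, s, t)" by (cases m) auto
  have "fin_supp (approxB q (Suc n) m)"
    unfolding m approxB_Suc using Suc by (cases i) auto
  moreover have "fin_supp (approxC q (Suc n) m)"
    unfolding m approxC_Suc using Suc by (cases i; cases j) auto
  ultimately show ?case by simp
qed simp

definition deg_bounded :: "(idx \<Rightarrow> 'k::zero) \<Rightarrow> nat \<Rightarrow> bool" where
  "deg_bounded v d \<longleftrightarrow> (\<forall>p\<in>supp v. abc_deg p \<le> d)"

lemma deg_bounded_subset: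
  "deg_bounded u d \<Longrightarrow> supp v \<subseteq> supp u \<union> supp w \<Longrightarrow> deg_bounded w d \<Longrightarrow> deg_bounded v d"
  unfolding deg_bounded_def by blast

lemma deg_bounded_unit_vec [simp]:
  "deg_bounded (unit_vec m :: idx \<Rightarrow> 'k::zero_neq_one) d \<longleftrightarrow> abc_deg m \<le> d"
  by (simp add: deg_bounded_def supp_def unit_vec_def del: split_paired_All)

lemma deg_bounded_add [simp]:
  "deg_bounded u d \<Longrightarrow> deg_bounded v d \<Longrightarrow> deg_bounded (u + (v :: idx \<Rightarrow> 'k::monoid_add)) d"
  by (erule deg_bounded_subset) (auto simp: supp_def)

lemma deg_bounded_diff [simp]:
  "deg_bounded u d \<Longrightarrow> deg_bounded v d \<Longrightarrow> deg_bounded (u - (v :: idx \<Rightarrow> 'k::group_add)) d"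
  by (erule deg_bounded_subset) (auto simp: supp_def)

lemma deg_bounded_smult [simp]:
  "deg_bounded v d \<Longrightarrow> deg_bounded (smult c (v :: idx \<Rightarrow> 'k::mult_zero)) d"
  by (rule deg_bounded_subset[of v _ _ v]) (auto simp: supp_def)

lemma deg_bounded_mono: "deg_bounded v d \<Longrightarrow> d \<le> e \<Longrightarrow> deg_bounded v e"
  by (auto simp: deg_bounded_def)

lemma deg_bounded_lin_ext:
  "(\<And>m. m \<in> supp v \<Longrightarrow> deg_bounded (f m) d) \<Longrightarrow> deg_bounded (lin_ext f v) d"
  using supp_lin_ext[of f v] unfolding deg_bounded_def by blast

lemma deg_bounded_lin_ext_matA:
  "deg_bounded v d \<Longrightarrow> deg_bounded (lin_ext matA v :: idx \<Rightarrow> 'k::field) (Suc d)"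
proof (rule deg_bounded_lin_ext)
  fix m assume "deg_bounded v d" "m \<in> supp v"
  then have "abc_deg m \<le> d" by (simp add: deg_bounded_def)
  then show "deg_bounded (matA m :: idx \<Rightarrow> 'k) (Suc d)" by (cases m) simp
qed

definition B_settled :: "'k::field \<Rightarrow> nat \<Rightarrow> idx \<Rightarrow> bool" where
  "B_settled q n m \<longleftrightarrow>
     approxB q (Suc n) m = approxB q n m \<and> deg_bounded (approxB q n m) (Suc (abc_deg m))"

definition C_settled :: "'k::field \<Rightarrow> nat \<Rightarrow> idx \<Rightarrow> bool" where
  "C_settled q n m \<longleftrightarrow>
     approxC q (Suc n) m = approxC q n m \<and> deg_bounded (approxC q n m) (Suc (abc_deg m))"

lemma B_settled_Suc:
  assumes B: "\<And>m. 2 * abc_deg m + 1 \<le> n \<Longrightarrow> B_settled q n m"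
    and C: "\<And>m. 2 * abc_deg m + 2 \<le> n \<Longrightarrow> C_settled q n m"
    and m: "2 * abc_deg m + 1 \<le> Suc n"
  shows "B_settled q (Suc n) m"
proof -
  obtain i j k r s t where m_eq: "m = (i, j, k, r, s, t)" by (cases m) auto
  show ?thesis
  proof (cases i)
    case 0
    then show ?thesis by (simp add: m_eq B_settled_def approxB_Suc)
  next
    case (Suc i')
    let ?m = "(i', j, k, r, s, t)"
    have "B_settled q n ?m" "C_settled q n ?m" using B C m m_eq Suc by simp_all
    then show ?thesis
      unfolding m_eq Suc B_settled_def C_settled_def approxB_Suc
      by (auto intro!: deg_bounded_lin_ext_matA deg_bounded_add deg_bounded_diff deg_bounded_smult
          intro: deg_bounded_mono)
  qed
qed

lemma C_settled_Suc:
  assumes B: "\<And>m. 2 * abc_deg m + 1 \<le> n \<Longrightarrow> B_settled q n m"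
    and C: "\<And>m. 2 * abc_deg m + 2 \<le> n \<Longrightarrow> C_settled q n m"
    and m: "2 * abc_deg m + 2 \<le> Suc n"
  shows "C_settled q (Suc n) m"
proof -
  obtain i j k r s t where m_eq: "m = (i, j, k, r, s, t)" by (cases m) auto
  consider "i = 0" "j = 0" | j' where "i = 0" "j = Suc j'" | i' where "i = Suc i'"
    by (cases i; cases j) auto
  then show ?thesis
  proof cases
    case 1
    then show ?thesis by (simp add: m_eq C_settled_def approxC_Suc)
  next
    case (2 j')
    let ?m = "(0, j', k, r, s, t)"
    have Cm: "C_settled q n ?m" using C m m_eq 2 by simp
    have deg_p: "abc_deg p \<le> abc_deg m" if "p \<in> supp (approxC q n ?m)" for p
    proof -
      have "abc_deg p \<le> Suc (abc_deg ?m)"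
        using Cm that by (simp add: C_settled_def deg_bounded_def)
      then show ?thesis by (simp add: m_eq 2)
    qed
    have B_p: "B_settled q n p" if "p \<in> supp (approxC q n ?m)" for p
      using B deg_p[OF that] m by simp
    have "lin_ext (approxB q (Suc n)) (approxC q n ?m) = lin_ext (approxB q n) (approxC q n ?m)"
      using B_p by (intro lin_ext_cong) (simp add: B_settled_def)
    moreover have "deg_bounded (lin_ext (approxB q n) (approxC q n ?m)) (Suc (abc_deg m))"
    proof (rule deg_bounded_lin_ext)
      fix p assume p: "p \<in> supp (approxC q n ?m)"
      then have "deg_bounded (approxB q n p) (Suc (abc_deg p))"
        using B_p by (simp add: B_settled_def)
      then show "deg_bounded (approxB q n p) (Suc (abc_deg m))"
        by (rule deg_bounded_mono) (use deg_p[OF p] in simp)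
    qed
    ultimately show ?thesis
      using Cm unfolding m_eq 2 C_settled_def approxC_Suc by simp
  next
    case (3 i')
    let ?m = "(i', j, k, r, s, t)"
    have "B_settled q n ?m" "C_settled q n ?m" using B C m m_eq 3 by simp_all
    then show ?thesis
      unfolding m_eq 3 B_settled_def C_settled_def approxC_Suc
      by (auto intro!: deg_bounded_lin_ext_matA deg_bounded_add deg_bounded_diff deg_bounded_smult
          intro: deg_bounded_mono)
  qed
qed

lemma approx_settled:
  "(\<forall>m. 2 * abc_deg m + 1 \<le> n \<longrightarrow> B_settled q n m) \<and>
   (\<forall>m. 2 * abc_deg m + 2 \<le> n \<longrightarrow> C_settled q n m)"
proof (induction n)
  case (Suc n)
  then show ?case using B_settled_Suc[of n q] C_settled_Suc[of n q] by blast
qed simp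

definition matB :: "'k::field \<Rightarrow> idx \<Rightarrow> idx \<Rightarrow> 'k" where
  "matB q m = approxB q (2 * abc_deg m + 1) m"

definition matC :: "'k::field \<Rightarrow> idx \<Rightarrow> idx \<Rightarrow> 'k" where
  "matC q m = approxC q (2 * abc_deg m + 2) m"

lemma approxB_eq_matB: "2 * abc_deg m + 1 \<le> n \<Longrightarrow> approxB q n m = matB q m"
proof (induction n rule: dec_induct)
  case (step p)
  then have "B_settled q p m" using approx_settled[of p q] by blast
  with step show ?case by (simp add: B_settled_def)
qed (simp add: matB_def)

lemma approxC_eq_matC: "2 * abc_deg m + 2 \<le> n \<Longrightarrow> approxC q n m = matC q m"
proof (induction n rule: dec_induct)
  case (step p)
  then have "C_settled q p m" using approx_settled[of p q] by blast
  with step show ?case by (simp add: C_settled_def)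
qed (simp add: matC_def)

lemma matC_deg_bounded: "deg_bounded (matC q m) (Suc (abc_deg m))"
proof -
  have "C_settled q (2 * abc_deg m + 2) m" using approx_settled[of "2 * abc_deg m + 2" q] by blast
  then show ?thesis by (simp add: C_settled_def matC_def)
qed

lemma fin_supp_matB [simp]: "fin_supp (matB q m)"
  unfolding matB_def using fin_supp_approx by blast

lemma fin_supp_matC [simp]: "fin_supp (matC q m)"
  unfolding matC_def using fin_supp_approx by blast

lemma matB_fixpoint: "matB q m = stepB q (matB q) (matC q) m"
proof -
  obtain i j k r s t where m: "m = (i, j, k, r, s, t)" by (cases m) auto
  have "matB q m = stepB q (approxB q (2 * abc_deg m)) (approxC q (2 * abc_deg m)) m"
    by (simp add: matB_def approxB_Suc)
  also have "\<dots> = stepB q (matB q) (matC q) m"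
    unfolding m by (cases i) (simp_all add: approxB_eq_matB approxC_eq_matC)
  finally show ?thesis .
qed

lemma matC_fixpoint: "matC q m = stepC q (matB q) (matC q) m"
proof -
  obtain i j k r s t where m: "m = (i, j, k, r, s, t)" by (cases m) auto
  have "matC q m = stepC q (approxB q (2 * abc_deg m + 1)) (approxC q (2 * abc_deg m + 1)) m"
    by (simp add: matC_def approxC_Suc)
  also have "\<dots> = stepC q (matB q) (matC q) m"
  proof (cases i)
    case 0
    have "lin_ext (approxB q (2 * j + 2 * k + 1)) (matC q (0, j', k, r, s, t))
        = lin_ext (matB q) (matC q (0, j', k, r, s, t))" if "j = Suc j'" for j'
      using matC_deg_bounded[of q "(0, j', k, r, s, t)"] that
      by (intro lin_ext_cong approxB_eq_matB) (auto simp: deg_bounded_def)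
    with 0 show ?thesis unfolding m by (cases j) (simp_all add: approxC_eq_matC)
  next
    case Suc
    then show ?thesis unfolding m by (simp add: approxB_eq_matB approxC_eq_matC)
  qed
  finally show ?thesis .
qed

lemma matB_0: "matB q (0, j, k, r, s, t) = unit_vec (0, Suc j, k, r, s, t)"
  by (rule trans[OF matB_fixpoint]) simp

lemma matB_Suc:
  "matB q (Suc i, j, k, r, s, t) =
     smult (q\<^sup>2) (lin_ext matA (matB q (i, j, k, r, s, t)))
     + smult (q * eps q) (matC q (i, j, k, r, s, t))
     - smult (q * eps q * inv_qsum q) (unit_vec (i, j, k, r, s, Suc t))"
  by (rule trans[OF matB_fixpoint]) simp

lemma matC_0_0: "matC q (0, 0, k, r, s, t) = unit_vec (0, 0, Suc k, r, s, t)"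
  by (rule trans[OF matC_fixpoint]) simp

lemma matC_0_Suc:
  "matC q (0, Suc j, k, r, s, t) =
     smult (q\<^sup>2) (lin_ext (matB q) (matC q (0, j, k, r, s, t)))
     + smult (q * eps q) (unit_vec (1, j, k, r, s, t))
     - smult (q * eps q * inv_qsum q) (unit_vec (0, j, k, Suc r, s, t))"
  by (rule trans[OF matC_fixpoint]) simp

lemma matC_Suc:
  "matC q (Suc i, j, k, r, s, t) =
     smult (inverse q ^ 2) (lin_ext matA (matC q (i, j, k, r, s, t)))
     - smult (inverse q * eps q) (matB q (i, j, k, r, s, t))
     + smult (inverse q * eps q * inv_qsum q) (unit_vec (i, j, k, r, Suc s, t))"
  by (rule trans[OF matC_fixpoint]) simp

fun shift_idx :: "nat \<times> nat \<times> nat \<Rightarrow> idx \<Rightarrow> idx" where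
  "shift_idx (x, y, z) (i, j, k, r, s, t) = (i, j, k, r + x, s + y, t + z)"

definition shift_vec :: "nat \<times> nat \<times> nat \<Rightarrow> (idx \<Rightarrow> 'k::field) \<Rightarrow> idx \<Rightarrow> 'k" where
  "shift_vec d v = lin_ext (\<lambda>p. unit_vec (shift_idx d p)) v"

lemma shift_vec_unit_vec [simp]: "shift_vec d (unit_vec p) = unit_vec (shift_idx d p)"
  by (simp add: shift_vec_def)

lemma fin_supp_shift_vec [simp]: "fin_supp v \<Longrightarrow> fin_supp (shift_vec d v)"
  by (simp add: shift_vec_def)

lemma shift_vec_add:
  "fin_supp u \<Longrightarrow> fin_supp v \<Longrightarrow> shift_vec d (u + v) = shift_vec d u + shift_vec d v"
  by (simp add: shift_vec_def lin_ext_add)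

lemma shift_vec_diff:
  "fin_supp u \<Longrightarrow> fin_supp v \<Longrightarrow> shift_vec d (u - v) = shift_vec d u - shift_vec d v"
  by (simp add: shift_vec_def lin_ext_diff)

lemma shift_vec_smult: "shift_vec d (smult c v) = smult c (shift_vec d v)"
  by (simp add: shift_vec_def lin_ext_smult)

lemma lin_ext_shift_vec:
  "fin_supp v \<Longrightarrow> lin_ext f (shift_vec d v) = lin_ext (\<lambda>p. f (shift_idx d p)) v"
  unfolding shift_vec_def by (subst lin_ext_comp) auto

lemma shift_vec_lin_ext:
  "fin_supp v \<Longrightarrow> (\<And>p. fin_supp (f p)) \<Longrightarrow>
   shift_vec d (lin_ext f v) = lin_ext (\<lambda>p. shift_vec d (f p)) v"
  unfolding shift_vec_def by (subst lin_ext_comp) auto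

lemma shift_vec_lin_ext_commute:
  assumes "fin_supp v" "\<And>p. fin_supp (f p)" "\<And>p. f (shift_idx d p) = shift_vec d (f p)"
  shows "shift_vec d (lin_ext f v) = lin_ext f (shift_vec d v)"
  using assms by (simp add: shift_vec_lin_ext lin_ext_shift_vec)

lemma matA_shift_idx: "matA (shift_idx d p) = (shift_vec d (matA p) :: idx \<Rightarrow> 'k::field)"
  by (cases d; cases p) simp

lemma shift_vec_lin_ext_matA:
  "fin_supp v \<Longrightarrow> shift_vec d (lin_ext matA v) = lin_ext matA (shift_vec d v :: idx \<Rightarrow> 'k::field)"
  by (rule shift_vec_lin_ext_commute) (simp_all add: matA_shift_idx)

lemma step_shift:
  assumes fin: "\<And>p. fin_supp (bn p)" "\<And>p. fin_supp (cn p)"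
    and B: "\<And>p. bn (shift_idx d p) = shift_vec d (bn p)"
    and C: "\<And>p. cn (shift_idx d p) = shift_vec d (cn p)"
  shows "stepB q bn cn (shift_idx d m) = shift_vec d (stepB q bn cn m)"
    and "stepC q bn cn (shift_idx d m) = shift_vec d (stepC q bn cn m)"
proof -
  obtain x y z where d: "d = (x, y, z)" by (cases d)
  obtain i j k r s t where m: "m = (i, j, k, r, s, t)" by (cases m) auto
  note simps = fin shift_vec_add shift_vec_diff shift_vec_smult shift_vec_lin_ext_matA
    B[unfolded d, symmetric] C[unfolded d, symmetric]
  show "stepB q bn cn (shift_idx d m) = shift_vec d (stepB q bn cn m)"
    unfolding d m by (cases i) (simp_all add: simps)
  have "shift_vec d (lin_ext bn (cn p)) = lin_ext bn (cn (shift_idx d p))" for p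
    by (subst C) (intro shift_vec_lin_ext_commute fin B)
  then show "stepC q bn cn (shift_idx d m) = shift_vec d (stepC q bn cn m)"
    unfolding d m by (cases i; cases j) (simp_all add: simps[unfolded d])
qed

lemma approx_shift:
  "approxB q n (shift_idx d m) = shift_vec d (approxB q n m) \<and>
   approxC q n (shift_idx d m) = shift_vec d (approxC q n m)"
proof (induction n arbitrary: m)
  case 0
  then show ?case by (simp add: shift_vec_def lin_ext_def supp_def)
next
  case (Suc n)
  then show ?case
    unfolding approxB_Suc approxC_Suc by (simp add: step_shift fin_supp_approx)
qed

lemma abc_deg_shift_idx [simp]: "abc_deg (shift_idx d m) = abc_deg m"
  by (cases d; cases m) simp

lemma matB_shift: "matB q (shift_idx d m) = shift_vec d (matB q m)"
  by (simp add: matB_def approx_shift)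

lemma matC_shift: "matC q (shift_idx d m) = shift_vec d (matC q m)"
  by (simp add: matC_def approx_shift)

section \<open>The operators \<open>A\<close>, \<open>B\<close>, \<open>C\<close> on \<open>V\<close> and their relations\<close>

definition opA :: "(idx \<Rightarrow> 'k::field) \<Rightarrow> idx \<Rightarrow> 'k" where
  "opA v = lin_ext matA v"

definition opB :: "'k::field \<Rightarrow> (idx \<Rightarrow> 'k) \<Rightarrow> idx \<Rightarrow> 'k" where
  "opB q v = lin_ext (matB q) v"

definition opC :: "'k::field \<Rightarrow> (idx \<Rightarrow> 'k) \<Rightarrow> idx \<Rightarrow> 'k" where
  "opC q v = lin_ext (matC q) v"

lemma fin_supp_opA [simp]: "fin_supp v \<Longrightarrow> fin_supp (opA v)"
  by (simp add: opA_def)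

lemma fin_supp_opB [simp]: "fin_supp v \<Longrightarrow> fin_supp (opB q v)"
  by (simp add: opB_def)

lemma fin_supp_opC [simp]: "fin_supp v \<Longrightarrow> fin_supp (opC q v)"
  by (simp add: opC_def)

lemma opA_unit_vec: "opA (unit_vec (i, j, k, r, s, t)) = unit_vec (Suc i, j, k, r, s, t)"
  by (simp add: opA_def)

lemmas op_defs = opA_def opB_def opC_def

lemma op_add:
  "fin_supp u \<Longrightarrow> fin_supp v \<Longrightarrow> opA (u + v) = opA u + opA v"
  "fin_supp u \<Longrightarrow> fin_supp v \<Longrightarrow> opB q (u + v) = opB q u + opB q v"
  "fin_supp u \<Longrightarrow> fin_supp v \<Longrightarrow> opC q (u + v) = opC q u + opC q v"
  by (simp_all add: op_defs lin_ext_add)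

lemma op_diff:
  "fin_supp u \<Longrightarrow> fin_supp v \<Longrightarrow> opA (u - v) = opA u - opA v"
  "fin_supp u \<Longrightarrow> fin_supp v \<Longrightarrow> opB q (u - v) = opB q u - opB q v"
  "fin_supp u \<Longrightarrow> fin_supp v \<Longrightarrow> opC q (u - v) = opC q u - opC q v"
  by (simp_all add: op_defs lin_ext_diff)

lemma op_smult:
  "opA (smult c v) = smult c (opA v)"
  "opB q (smult c v) = smult c (opB q v)"
  "opC q (smult c v) = smult c (opC q v)"
  by (simp_all add: op_defs lin_ext_smult)

lemma op_shift_vec:
  "fin_supp v \<Longrightarrow> opA (shift_vec d v) = shift_vec d (opA v)"
  "fin_supp v \<Longrightarrow> opB q (shift_vec d v) = shift_vec d (opB q v)"
  "fin_supp v \<Longrightarrow> opC q (shift_vec d v) = shift_vec d (opC q v)"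
  by (simp_all add: op_defs lin_ext_shift_vec shift_vec_lin_ext matA_shift_idx matB_shift matC_shift)

lemma lin_ext_comb:
  "smult a (lin_ext f v) + smult b (lin_ext g v) - smult c (lin_ext h v)
   = lin_ext (\<lambda>m. smult a (f m) + smult b (g m) - smult c (h m)) (v :: idx \<Rightarrow> 'k::field)"
  "smult a (lin_ext f v) - smult b (lin_ext g v) + smult c (lin_ext h v)
   = lin_ext (\<lambda>m. smult a (f m) - smult b (g m) + smult c (h m)) (v :: idx \<Rightarrow> 'k::field)"
  by (simp_all add: lin_ext_fadd lin_ext_fdiff lin_ext_fsmult)

lemma lin_ext_comp_op:
  assumes "fin_supp v"
  shows "opB q (opA v) = lin_ext (\<lambda>m. lin_ext (matB q) (matA m)) v"
    and "opA (opB q v) = lin_ext (\<lambda>m. lin_ext matA (matB q m)) v"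
    and "opC q (opA v) = lin_ext (\<lambda>m. lin_ext (matC q) (matA m)) v"
    and "opA (opC q v) = lin_ext (\<lambda>m. lin_ext matA (matC q m)) v"
  using assms by (simp_all add: op_defs lin_ext_comp)

lemma opB_opA:
  assumes "fin_supp v"
  shows "opB q (opA v) = smult (q\<^sup>2) (opA (opB q v)) + smult (q * eps q) (opC q v)
    - smult (q * eps q * inv_qsum q) (shift_vec (0, 0, 1) v)"
  unfolding lin_ext_comp_op[OF assms] opC_def shift_vec_def lin_ext_comb
proof (rule lin_ext_cong)
  fix m :: idx
  show "lin_ext (matB q) (matA m) = smult (q\<^sup>2) (lin_ext matA (matB q m)) + smult (q * eps q) (matC q m)
      - smult (q * eps q * inv_qsum q) (unit_vec (shift_idx (0, 0, 1) m))"
    by (cases m) (simp add: matB_Suc fun_eq_iff)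
qed

lemma opC_opA:
  assumes "fin_supp v"
  shows "opC q (opA v) = smult (inverse q ^ 2) (opA (opC q v)) - smult (inverse q * eps q) (opB q v)
    + smult (inverse q * eps q * inv_qsum q) (shift_vec (0, 1, 0) v)"
  unfolding lin_ext_comp_op[OF assms] opB_def shift_vec_def lin_ext_comb
proof (rule lin_ext_cong)
  fix m :: idx
  show "lin_ext (matC q) (matA m) = smult (inverse q ^ 2) (lin_ext matA (matC q m))
      - smult (inverse q * eps q) (matB q m) + smult (inverse q * eps q * inv_qsum q) (unit_vec (shift_idx (0, 1, 0) m))"
    by (cases m) (simp add: matC_Suc fun_eq_iff)
qed

text \<open>The relation for \<open>CB\<close> is built into the definition of \<open>C\<close> only on vectors
  \<open>e(0, j, \<dots>)\<close>. It propagates to all of \<open>V\<close> by induction on the exponent of \<open>A\<close>: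
  commuting \<open>A\<close> to the front of both sides with the other two relations produces the same
  expression, up to an instance of the relation for smaller exponent.\<close>

definition CB_rel :: "'k::field \<Rightarrow> (idx \<Rightarrow> 'k) \<Rightarrow> bool" where
  "CB_rel q x \<longleftrightarrow> opC q (opB q x) =
     smult (q\<^sup>2) (opB q (opC q x)) + smult (q * eps q) (opA x) - smult (q * eps q * inv_qsum q) (shift_vec (1, 0, 0) x)"

lemma CB_rel_0: "CB_rel q (unit_vec (0, j, k, r, s, t))"
  unfolding CB_rel_def op_defs by (simp add: matB_0 matC_0_Suc fun_eq_iff)

lemma CB_rel_opA:
  assumes q: "q \<noteq> 0" and x: "fin_supp x" and rel: "CB_rel q x"
  shows "CB_rel q (opA x)"
proof -
  let ?e = "eps q" and ?k = "inv_qsum q"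
  define X1 where "X1 = opA (opB q (opC q x))"
  define X2 where "X2 = opA (opA x)"
  define X3 where "X3 = opA (shift_vec (1, 0, 0) x)"
  define X4 where "X4 = opB q (opB q x)"
  define X5 where "X5 = shift_vec (0, 1, 0) (opB q x)"
  define X6 where "X6 = opC q (opC q x)"
  define X7 where "X7 = shift_vec (0, 0, 1) (opC q x)"
  note lin = op_add op_diff op_smult shift_vec_add shift_vec_diff shift_vec_smult
  have L1: "opC q (opB q (opA x)) = smult (q\<^sup>2) (opC q (opA (opB q x))) + smult (q * ?e) X6 - smult (q * ?e * ?k) X7"
    using x by (simp add: opB_opA lin X6_def X7_def op_shift_vec)
  have L2: "opC q (opA (opB q x)) = smult (inverse q ^ 2) (opA (opC q (opB q x))) - smult (inverse q * ?e) X4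
     + smult (inverse q * ?e * ?k) X5"
    using x by (simp add: opC_opA X4_def X5_def)
  have L3: "opA (opC q (opB q x)) = smult (q\<^sup>2) X1 + smult (q * ?e) X2 - smult (q * ?e * ?k) X3"
    using x rel by (simp add: CB_rel_def lin X1_def X2_def X3_def)
  have R1: "opB q (opC q (opA x)) = smult (inverse q ^ 2) (opB q (opA (opC q x))) - smult (inverse q * ?e) X4
     + smult (inverse q * ?e * ?k) X5"
    using x by (simp add: opC_opA lin X4_def X5_def op_shift_vec)
  have R2: "opB q (opA (opC q x)) = smult (q\<^sup>2) X1 + smult (q * ?e) X6 - smult (q * ?e * ?k) X7"
    using x by (simp add: opB_opA X1_def X6_def X7_def)
  have R3: "shift_vec (1, 0, 0) (opA x) = X3"
    using x by (simp add: X3_def op_shift_vec)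
  show ?thesis
    unfolding CB_rel_def L1 L2 L3 R1 R2 R3 X2_def[symmetric]
    using q by (simp add: fun_eq_iff field_simps power2_eq_square)
qed

lemma CB_rel_unit_vec: "q \<noteq> 0 \<Longrightarrow> CB_rel q (unit_vec (i, j, k, r, s, t))"
proof (induction i)
  case 0
  show ?case by (rule CB_rel_0)
next
  case (Suc i)
  then have "CB_rel q (opA (unit_vec (i, j, k, r, s, t)))" by (intro CB_rel_opA) auto
  then show ?case by (simp add: opA_unit_vec)
qed

lemma opC_opB:
  assumes q: "q \<noteq> 0" and v: "fin_supp v"
  shows "opC q (opB q v) =
    smult (q\<^sup>2) (opB q (opC q v)) + smult (q * eps q) (opA v) - smult (q * eps q * inv_qsum q) (shift_vec (1, 0, 0) v)"
proof -
  have basis: "opC q (opB q v) = lin_ext (\<lambda>m. opC q (opB q (unit_vec m))) v"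
    "opB q (opC q v) = lin_ext (\<lambda>m. opB q (opC q (unit_vec m))) v"
    "opA v = lin_ext (\<lambda>m. opA (unit_vec m)) v"
    "shift_vec (1, 0, 0) v = lin_ext (\<lambda>m. shift_vec (1, 0, 0) (unit_vec m)) v"
    using v by (simp_all add: op_defs shift_vec_def lin_ext_comp)
  show ?thesis
    unfolding basis lin_ext_comb
  proof (rule lin_ext_cong)
    fix m :: idx
    show "opC q (opB q (unit_vec m)) = smult (q\<^sup>2) (opB q (opC q (unit_vec m))) + smult (q * eps q) (opA (unit_vec m))
      - smult (q * eps q * inv_qsum q) (shift_vec (1, 0, 0) (unit_vec m))"
      using CB_rel_unit_vec[OF q] by (cases m) (simp add: CB_rel_def)
  qed
qed

lemma take_drop_eq_iff:
  "i \<le> length w \<Longrightarrow> (take i w = u \<and> drop i w = v) \<longleftrightarrow> (i = length u \<and> w = u @ v)"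
  by (metis append_take_drop_id append_eq_conv_conj length_take min_absorb2)

lemma fa_mult_unit_vec:
  "fa_mult (unit_vec u) (unit_vec v) = (unit_vec (u @ v) :: gen list \<Rightarrow> 'k::comm_semiring_1)"
proof (rule ext)
  fix w :: "gen list"
  have "fa_mult (unit_vec u) (unit_vec v) w = (\<Sum>i\<le>length w. (if i = length u \<and> w = u @ v then 1 else 0))"
    unfolding fa_mult_def
    by (intro sum.cong refl) (auto simp: unit_vec_apply take_drop_eq_iff[symmetric])
  also have "\<dots> = unit_vec (u @ v) w"
    by (auto simp: sum.delta' unit_vec_apply)
  finally show "fa_mult (unit_vec u) (unit_vec v) w = unit_vec (u @ v) w" .
qed

lemma fa_mult_lin_ext_left: "fa_mult (lin_ext F v) g = lin_ext (\<lambda>m. fa_mult (F m) g) v"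
  unfolding fa_mult_def lin_ext_def
  by (simp add: fun_eq_iff sum_distrib_right sum_distrib_left mult.assoc sum.swap[of _ "{..length _}"])

lemma fa_mult_lin_ext_right: "fa_mult g (lin_ext F v) = lin_ext (\<lambda>m. fa_mult g (F m)) v"
  unfolding fa_mult_def lin_ext_def
  by (simp add: fun_eq_iff sum_distrib_right sum_distrib_left mult.left_commute sum.swap[of _ "{..length _}"])

lemma fa_mult_add_left: "fa_mult (f + g) h = fa_mult f h + fa_mult g h"
  by (simp add: fa_mult_def fun_eq_iff distrib_right sum.distrib)

lemma fa_mult_add_right: "fa_mult h (f + g) = fa_mult h f + fa_mult h g"
  by (simp add: fa_mult_def fun_eq_iff distrib_left sum.distrib)

lemma fa_mult_zero_left [simp]: "fa_mult 0 h = 0"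
  by (simp add: fa_mult_def fun_eq_iff)

lemma fa_mult_zero_right [simp]: "fa_mult h 0 = 0"
  by (simp add: fa_mult_def fun_eq_iff)

lemma fa_mult_diff_left: "fa_mult (f - g) h = fa_mult f h - fa_mult g (h :: gen list \<Rightarrow> 'k::comm_ring_1)"
  by (simp add: fa_mult_def fun_eq_iff left_diff_distrib sum_subtractf)

lemma fa_mult_diff_right: "fa_mult h (f - g) = fa_mult h f - fa_mult h (g :: gen list \<Rightarrow> 'k::comm_ring_1)"
  by (simp add: fa_mult_def fun_eq_iff right_diff_distrib sum_subtractf)

lemma fa_mult_smult_left: "fa_mult (smult c f) h = smult c (fa_mult f h)"
  by (simp add: fa_mult_def fun_eq_iff sum_distrib_left mult.assoc)

lemma fa_mult_smult_right: "fa_mult h (smult c f) = smult c (fa_mult h f)"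
  by (simp add: fa_mult_def fun_eq_iff sum_distrib_left mult.left_commute)

lemma fa_mult_expand:
  assumes "fin_supp f" "fin_supp (g :: gen list \<Rightarrow> 'k::comm_semiring_1)"
  shows "fa_mult f g = lin_ext (\<lambda>u. lin_ext (\<lambda>x. unit_vec (u @ x)) g) f"
proof -
  have "fa_mult f g = fa_mult (lin_ext unit_vec f) (lin_ext unit_vec g)"
    using assms by (simp add: lin_ext_unit_vec_id)
  also have "\<dots> = lin_ext (\<lambda>u. fa_mult (unit_vec u) (lin_ext unit_vec g)) f"
    by (rule fa_mult_lin_ext_left)
  also have "\<dots> = lin_ext (\<lambda>u. lin_ext (\<lambda>x. unit_vec (u @ x)) g) f"
    by (simp only: fa_mult_lin_ext_right fa_mult_unit_vec)
  finally show ?thesis .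
qed

lemma fin_supp_fa_mult [simp]:
  "fin_supp f \<Longrightarrow> fin_supp g \<Longrightarrow> fin_supp (fa_mult f (g :: gen list \<Rightarrow> 'k::comm_semiring_1))"
  by (simp add: fa_mult_expand)

lemma fa_mult_assoc:
  assumes "fin_supp f" "fin_supp g" "fin_supp (h :: gen list \<Rightarrow> 'k::field)"
  shows "fa_mult (fa_mult f g) h = fa_mult f (fa_mult g h)"
proof -
  have "fa_mult (fa_mult f g) h = lin_ext (\<lambda>u. lin_ext (\<lambda>x. lin_ext (\<lambda>y. unit_vec (u @ x @ y)) h) g) f"
    using assms by (simp add: fa_mult_expand lin_ext_comp)
  also have "\<dots> = fa_mult f (fa_mult g h)"
    using assms by (simp add: fa_mult_expand lin_ext_comp)
  finally show ?thesis .
qed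

lemma fa_mult_one_left: "fin_supp f \<Longrightarrow> fa_mult (unit_vec []) f = (f :: gen list \<Rightarrow> 'k::comm_semiring_1)"
  by (simp add: fa_mult_expand lin_ext_unit_vec_id)

lemma fa_mult_one_right: "fin_supp f \<Longrightarrow> fa_mult f (unit_vec []) = (f :: gen list \<Rightarrow> 'k::comm_semiring_1)"
  by (simp add: fa_mult_expand lin_ext_unit_vec_id)

lemma fin_supp_fa_pow [simp]: "fin_supp f \<Longrightarrow> fin_supp (fa_pow (f :: gen list \<Rightarrow> 'k::comm_semiring_1) n)"
  by (induction n) (auto simp: fa_word_eq)

lemma aw_A_eq: "aw_A = unit_vec [GA]"
  by (simp add: aw_A_def fa_word_eq)

lemma aw_B_eq: "aw_B = unit_vec [GB]"
  by (simp add: aw_B_def fa_word_eq)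

lemma aw_C_eq: "aw_C = unit_vec [GC]"
  by (simp add: aw_C_def fa_word_eq)

lemma fin_supp_aw_gens [simp]:
  "fin_supp (aw_A :: gen list \<Rightarrow> 'k::zero_neq_one)"
  "fin_supp (aw_B :: gen list \<Rightarrow> 'k::zero_neq_one)"
  "fin_supp (aw_C :: gen list \<Rightarrow> 'k::zero_neq_one)"
  by (simp_all add: aw_A_eq aw_B_eq aw_C_eq)

lemma fin_supp_aw_central [simp]:
  "fin_supp (aw_gA q)" "fin_supp (aw_gB q)" "fin_supp (aw_gC q)"
  "fin_supp (aw_alpha q)" "fin_supp (aw_beta q)" "fin_supp (aw_gamma q)"
  by (simp_all add: aw_alpha_def aw_beta_def aw_gamma_def aw_gA_def aw_gB_def aw_gC_def
      aw_cent_def fa_smult_eq)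

lemma fin_supp_aw_mon [simp]: "fin_supp (aw_mon q m)"
  by (cases m) simp

lemma fin_supp_aw_rels: "s \<in> aw_rels q \<Longrightarrow> fin_supp s"
  unfolding aw_rels_def by auto

lemma fa_span_zero: "0 \<in> fa_span S"
  unfolding fa_span_def by (rule CollectI, rule exI[of _ "{}"]) simp

lemma fa_span_intro:
  "finite T \<Longrightarrow> T \<subseteq> S \<Longrightarrow> x = (\<Sum>t\<in>T. smult (c t) t) \<Longrightarrow> x \<in> fa_span S"
  unfolding fa_span_def fa_smult_eq by blast

lemma fa_span_induct [consumes 1, case_names zero add]:
  assumes x: "x \<in> fa_span S" and zero: "P 0"
    and add: "\<And>c s y. s \<in> S \<Longrightarrow> P y \<Longrightarrow> P (smult c s + y)"
  shows "P x"
proof -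
  obtain T c where T: "finite T" "T \<subseteq> S" "x = (\<Sum>t\<in>T. smult (c t) t)"
    using x unfolding fa_span_def fa_smult_eq by blast
  have "P (\<Sum>t\<in>T. smult (c t) t)"
    using T(1,2) by (induction T rule: finite_induct) (auto simp: zero add)
  with T(3) show ?thesis by simp
qed

lemma fa_span_elem: "s \<in> S \<Longrightarrow> s \<in> fa_span S"
  by (rule fa_span_intro[where T="{s}" and c="\<lambda>_. 1"]) (auto simp: fun_eq_iff)

lemma fa_span_smult:
  "x \<in> fa_span S \<Longrightarrow> smult a x \<in> fa_span (S :: (gen list \<Rightarrow> 'k::comm_semiring_1) set)"
proof -
  assume "x \<in> fa_span S"
  then obtain T c where T: "finite T" "T \<subseteq> S" "x = (\<Sum>t\<in>T. smult (c t) t)"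
    unfolding fa_span_def fa_smult_eq by blast
  have "smult a x = (\<Sum>t\<in>T. smult (a * c t) t)"
    unfolding T(3) by (simp add: fun_eq_iff sum_apply sum_distrib_left mult.assoc)
  with T show ?thesis by (intro fa_span_intro)
qed

lemma fa_span_add:
  "x \<in> fa_span S \<Longrightarrow> y \<in> fa_span S \<Longrightarrow> x + y \<in> fa_span (S :: (gen list \<Rightarrow> 'k::comm_semiring_1) set)"
proof -
  assume "x \<in> fa_span S" "y \<in> fa_span S"
  then obtain T1 c1 T2 c2 where T: "finite T1" "T1 \<subseteq> S" "x = (\<Sum>t\<in>T1. smult (c1 t) t)"
    "finite T2" "T2 \<subseteq> S" "y = (\<Sum>t\<in>T2. smult (c2 t) t)"
    unfolding fa_span_def fa_smult_eq by blast
  define d1 where "d1 t = (if t \<in> T1 then c1 t else 0)" for t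
  define d2 where "d2 t = (if t \<in> T2 then c2 t else 0)" for t
  have x: "x = (\<Sum>t\<in>T1 \<union> T2. smult (d1 t) t)"
    unfolding T(3) using T by (intro sum.mono_neutral_cong_left) (auto simp: d1_def fun_eq_iff)
  have y: "y = (\<Sum>t\<in>T1 \<union> T2. smult (d2 t) t)"
    unfolding T(6) using T by (intro sum.mono_neutral_cong_left) (auto simp: d2_def fun_eq_iff)
  have "x + y = (\<Sum>t\<in>T1 \<union> T2. smult (d1 t + d2 t) t)"
    unfolding x y by (simp add: sum.distrib[symmetric] fun_eq_iff sum_apply distrib_right)
  with T show ?thesis by (intro fa_span_intro) auto
qed

lemma fa_span_diff:
  "x \<in> fa_span S \<Longrightarrow> y \<in> fa_span S \<Longrightarrow> x - y \<in> fa_span (S :: (gen list \<Rightarrow> 'k::comm_ring_1) set)"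
proof -
  assume "x \<in> fa_span S" "y \<in> fa_span S"
  moreover have "x - y = x + smult (-1) y" by (simp add: fun_eq_iff)
  ultimately show ?thesis by (metis fa_span_add fa_span_smult)
qed

lemma fa_span_sum:
  "(\<And>t. t \<in> T \<Longrightarrow> g t \<in> fa_span S) \<Longrightarrow> (\<Sum>t\<in>T. g t) \<in> fa_span (S :: (gen list \<Rightarrow> 'k::comm_semiring_1) set)"
  by (induction T rule: infinite_finite_induct) (auto simp: fa_span_zero fa_span_add)

lemma fa_span_lin_ext:
  "(\<And>m. m \<in> supp v \<Longrightarrow> D m \<in> fa_span S) \<Longrightarrow> lin_ext D v \<in> fa_span (S :: (gen list \<Rightarrow> 'k::comm_semiring_1) set)"
  unfolding lin_ext_as_sum by (intro fa_span_sum fa_span_smult) auto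

definition ideal_gens :: "'k::field \<Rightarrow> (gen list \<Rightarrow> 'k) set" where
  "ideal_gens q = {fa_mult (fa_mult (unit_vec u) s) (unit_vec v) | u s v. s \<in> aw_rels q}"

lemma aw_ideal_eq_span: "aw_ideal q = fa_span (ideal_gens q)"
  by (simp add: aw_ideal_def fa_ideal_def ideal_gens_def fa_word_eq)

lemma fin_supp_ideal_gens: "x \<in> ideal_gens q \<Longrightarrow> fin_supp x"
  unfolding ideal_gens_def by (auto dest: fin_supp_aw_rels)

lemma aw_rels_in_ideal: "s \<in> aw_rels q \<Longrightarrow> s \<in> aw_ideal q"
proof -
  assume s: "s \<in> aw_rels q"
  then have "fa_mult (fa_mult (unit_vec []) s) (unit_vec []) \<in> ideal_gens q"
    unfolding ideal_gens_def by blast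
  with s have "s \<in> ideal_gens q"
    by (simp add: fin_supp_aw_rels fa_mult_one_left fa_mult_one_right)
  then show ?thesis unfolding aw_ideal_eq_span by (rule fa_span_elem)
qed

lemma aw_ideal_add: "x \<in> aw_ideal q \<Longrightarrow> y \<in> aw_ideal q \<Longrightarrow> x + y \<in> aw_ideal q"
  unfolding aw_ideal_eq_span by (rule fa_span_add)

lemma aw_ideal_diff: "x \<in> aw_ideal q \<Longrightarrow> y \<in> aw_ideal q \<Longrightarrow> x - y \<in> aw_ideal q"
  unfolding aw_ideal_eq_span by (rule fa_span_diff)

lemma aw_ideal_smult: "x \<in> aw_ideal q \<Longrightarrow> smult a x \<in> aw_ideal q"
  unfolding aw_ideal_eq_span by (rule fa_span_smult)

lemma aw_ideal_zero [simp]: "0 \<in> aw_ideal q" "(\<lambda>_. 0) \<in> aw_ideal q"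
  unfolding aw_ideal_eq_span using fa_span_zero by (auto simp: zero_fun_def)

lemma aw_ideal_lin_ext: "(\<And>m. m \<in> supp v \<Longrightarrow> D m \<in> aw_ideal q) \<Longrightarrow> lin_ext D v \<in> aw_ideal q"
  unfolding aw_ideal_eq_span by (rule fa_span_lin_ext)

lemma ideal_gens_mult_unit_vec:
  assumes "y \<in> ideal_gens q"
  shows "fa_mult (unit_vec a) y \<in> ideal_gens q" and "fa_mult y (unit_vec a) \<in> ideal_gens q"
proof -
  obtain u s v where y: "y = fa_mult (fa_mult (unit_vec u) s) (unit_vec v)" and s: "s \<in> aw_rels q"
    using assms unfolding ideal_gens_def by blast
  have "fa_mult (unit_vec a) y = fa_mult (fa_mult (unit_vec (a @ u)) s) (unit_vec v)"
    and "fa_mult y (unit_vec a) = fa_mult (fa_mult (unit_vec u) s) (unit_vec (v @ a))"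
    unfolding y using fin_supp_aw_rels[OF s]
    by (simp_all add: fa_mult_assoc fa_mult_unit_vec flip: fa_mult_unit_vec)
  with s show "fa_mult (unit_vec a) y \<in> ideal_gens q" "fa_mult y (unit_vec a) \<in> ideal_gens q"
    unfolding ideal_gens_def by blast+
qed

lemma aw_ideal_mult_unit_vec:
  assumes "x \<in> aw_ideal q"
  shows "fa_mult (unit_vec a) x \<in> aw_ideal q" and "fa_mult x (unit_vec a) \<in> aw_ideal q"
proof -
  have "fa_mult (unit_vec a) x \<in> fa_span (ideal_gens q) \<and> fa_mult x (unit_vec a) \<in> fa_span (ideal_gens q)"
    using assms unfolding aw_ideal_eq_span
  proof (induction rule: fa_span_induct)
    case (add c s y)
    then show ?case
      unfolding fa_mult_add_left fa_mult_add_right fa_mult_smult_left fa_mult_smult_right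
      by (blast intro: fa_span_add fa_span_smult fa_span_elem ideal_gens_mult_unit_vec)
  qed (simp only: fa_mult_zero_left fa_mult_zero_right fa_span_zero simp_thms)
  then show "fa_mult (unit_vec a) x \<in> aw_ideal q" "fa_mult x (unit_vec a) \<in> aw_ideal q"
    unfolding aw_ideal_eq_span by simp_all
qed

lemma aw_ideal_mult:
  assumes f: "fin_supp f" and x: "x \<in> aw_ideal q"
  shows "fa_mult f x \<in> aw_ideal q" and "fa_mult x f \<in> aw_ideal q"
proof -
  have "fa_mult f x = lin_ext (\<lambda>u. fa_mult (unit_vec u) x) f"
    and "fa_mult x f = lin_ext (\<lambda>u. fa_mult x (unit_vec u)) f"
    using f by (simp_all add: lin_ext_unit_vec_id flip: fa_mult_lin_ext_left fa_mult_lin_ext_right)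
  with x show "fa_mult f x \<in> aw_ideal q" "fa_mult x f \<in> aw_ideal q"
    by (simp_all add: aw_ideal_lin_ext aw_ideal_mult_unit_vec)
qed

definition central_mod :: "'k::field \<Rightarrow> (gen list \<Rightarrow> 'k) \<Rightarrow> bool" where
  "central_mod q g \<longleftrightarrow> fin_supp g \<and> (\<forall>f. fin_supp f \<longrightarrow> fa_mult g f - fa_mult f g \<in> aw_ideal q)"

lemma commutator_letter_in_ideal:
  assumes "g \<in> {aw_gA q, aw_gB q, aw_gC q}"
  shows "fa_mult g (unit_vec [a]) - fa_mult (unit_vec [a]) g \<in> aw_ideal q"
proof -
  have "unit_vec [a] \<in> {aw_A, aw_B, aw_C}" by (cases a) (auto simp: aw_A_eq aw_B_eq aw_C_eq)
  with assms have "fa_mult (unit_vec [a]) g - fa_mult g (unit_vec [a]) \<in> aw_rels q"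
    unfolding aw_rels_def by blast
  then have "fa_mult (unit_vec [a]) g - fa_mult g (unit_vec [a]) \<in> aw_ideal q"
    by (rule aw_rels_in_ideal)
  then have "smult (-1) (fa_mult (unit_vec [a]) g - fa_mult g (unit_vec [a])) \<in> aw_ideal q"
    by (rule aw_ideal_smult)
  moreover have "smult (-1) (fa_mult (unit_vec [a]) g - fa_mult g (unit_vec [a]))
      = fa_mult g (unit_vec [a]) - fa_mult (unit_vec [a]) g"
    by (simp add: fun_eq_iff)
  ultimately show ?thesis by simp
qed

lemma central_mod_gABC:
  assumes g: "g \<in> {aw_gA q, aw_gB q, aw_gC q}"
  shows "central_mod q g"
proof -
  have fin_g: "fin_supp g" using g by auto
  have word: "fa_mult g (unit_vec w) - fa_mult (unit_vec w) g \<in> aw_ideal q" for w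
  proof (induction w)
    case Nil
    then show ?case using fin_g by (simp add: fa_mult_one_left fa_mult_one_right aw_ideal_zero)
  next
    case (Cons a w)
    have letters: "unit_vec (a # w) = fa_mult (unit_vec [a]) (unit_vec w)"
      by (simp add: fa_mult_unit_vec)
    have "fa_mult g (unit_vec (a # w)) - fa_mult (unit_vec (a # w)) g
        = fa_mult (fa_mult g (unit_vec [a]) - fa_mult (unit_vec [a]) g) (unit_vec w)
          + fa_mult (unit_vec [a]) (fa_mult g (unit_vec w) - fa_mult (unit_vec w) g)"
      unfolding letters using fin_g
      by (simp add: fa_mult_diff_left fa_mult_diff_right fa_mult_assoc fun_eq_iff)
    also have "\<dots> \<in> aw_ideal q"
      by (intro aw_ideal_add aw_ideal_mult fin_supp_unit_vec commutator_letter_in_ideal[OF g] Cons.IH)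
    finally show ?case .
  qed
  have "fa_mult g f - fa_mult f g \<in> aw_ideal q" if f: "fin_supp f" for f
  proof -
    have "fa_mult g f - fa_mult f g = lin_ext (\<lambda>u. fa_mult g (unit_vec u) - fa_mult (unit_vec u) g) f"
      using f by (simp add: lin_ext_fdiff lin_ext_unit_vec_id flip: fa_mult_lin_ext_left fa_mult_lin_ext_right)
    also have "\<dots> \<in> aw_ideal q" using word by (rule aw_ideal_lin_ext)
    finally show ?thesis .
  qed
  with fin_g show ?thesis unfolding central_mod_def by blast
qed

lemma central_mod_mult_cong:
  assumes g: "central_mod q g" and P: "fin_supp P" and Y: "fin_supp Y"
    and Z: "fa_mult g Y - Z \<in> aw_ideal q"
  shows "fa_mult g (fa_mult P Y) - fa_mult P Z \<in> aw_ideal q"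
proof -
  have "fa_mult g (fa_mult P Y) - fa_mult P Z
      = fa_mult (fa_mult g P - fa_mult P g) Y + fa_mult P (fa_mult g Y - Z)"
    using g P Y by (simp add: central_mod_def fa_mult_diff_left fa_mult_diff_right fa_mult_assoc)
  also have "\<dots> \<in> aw_ideal q"
    using g P Y Z unfolding central_mod_def by (intro aw_ideal_add aw_ideal_mult) auto
  finally show ?thesis .
qed

section \<open>The representation of the free algebra on \<open>V\<close>\<close>

fun mat_gen :: "'k::field \<Rightarrow> gen \<Rightarrow> idx \<Rightarrow> idx \<Rightarrow> 'k" where
  "mat_gen q GA = matA"
| "mat_gen q GB = matB q"
| "mat_gen q GC = matC q"

lemma fin_supp_mat_gen [simp]: "fin_supp (mat_gen q g m)"
  by (cases g) auto

fun rep_word :: "'k::field \<Rightarrow> gen list \<Rightarrow> (idx \<Rightarrow> 'k) \<Rightarrow> idx \<Rightarrow> 'k" where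
  "rep_word q [] v = v"
| "rep_word q (g # w) v = lin_ext (mat_gen q g) (rep_word q w v)"

definition rep :: "'k::field \<Rightarrow> (gen list \<Rightarrow> 'k) \<Rightarrow> (idx \<Rightarrow> 'k) \<Rightarrow> idx \<Rightarrow> 'k" where
  "rep q f v = lin_ext (\<lambda>w. rep_word q w v) f"

lemma fin_supp_rep_word [simp]: "fin_supp v \<Longrightarrow> fin_supp (rep_word q w v)"
  by (induction w) auto

lemma rep_word_zero [simp]: "rep_word q w 0 = 0"
  by (induction w) (simp_all add: lin_ext_def supp_def)

lemma rep_word_lin_ext:
  "fin_supp v \<Longrightarrow> (\<And>m. fin_supp (F m)) \<Longrightarrow> rep_word q w (lin_ext F v) = lin_ext (\<lambda>m. rep_word q w (F m)) v"
  by (induction w) (auto simp: lin_ext_comp)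

lemma rep_word_append: "rep_word q (u @ w) v = rep_word q u (rep_word q w v)"
  by (induction u) auto

lemma fin_supp_rep [simp]: "fin_supp f \<Longrightarrow> fin_supp v \<Longrightarrow> fin_supp (rep q f v)"
  by (simp add: rep_def)

lemma rep_add: "fin_supp f \<Longrightarrow> fin_supp g \<Longrightarrow> rep q (f + g) v = rep q f v + rep q g v"
  by (simp add: rep_def lin_ext_add)

lemma rep_diff: "fin_supp f \<Longrightarrow> fin_supp g \<Longrightarrow> rep q (f - g) v = rep q f v - rep q g v"
  by (simp add: rep_def lin_ext_diff)

lemma rep_smult: "rep q (smult c f) v = smult c (rep q f v)"
  by (simp add: rep_def lin_ext_smult)

lemma rep_sum:
  "(\<And>t. t \<in> T \<Longrightarrow> fin_supp (g t)) \<Longrightarrow> rep q (\<Sum>t\<in>T. g t) v = (\<Sum>t\<in>T. rep q (g t) v)"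
  unfolding rep_def by (rule lin_ext_sum)

lemma rep_mult:
  assumes "fin_supp f" "fin_supp g" "fin_supp v"
  shows "rep q (fa_mult f g) v = rep q f (rep q g v)"
proof -
  have "rep q (fa_mult f g) v = lin_ext (\<lambda>u. lin_ext (\<lambda>x. rep_word q (u @ x) v) g) f"
    using assms by (simp add: fa_mult_expand rep_def lin_ext_comp)
  also have "\<dots> = lin_ext (\<lambda>u. rep_word q u (lin_ext (\<lambda>x. rep_word q x v) g)) f"
    using assms by (simp add: rep_word_lin_ext rep_word_append)
  finally show ?thesis by (simp add: rep_def)
qed

lemma rep_unit_vec [simp]: "rep q (unit_vec w) v = rep_word q w v"
  by (simp add: rep_def)

lemma rep_aw_A: "rep q aw_A v = opA v"
  by (simp add: aw_A_eq opA_def)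

lemma rep_aw_B: "rep q aw_B v = opB q v"
  by (simp add: aw_B_eq opB_def)

lemma rep_aw_C: "rep q aw_C v = opC q v"
  by (simp add: aw_C_eq opC_def)

lemma eps_nonzero: assumes "q \<noteq> 0" "q ^ 4 \<noteq> 1" shows "eps q \<noteq> 0"
proof
  assume "eps q = 0"
  then have "q\<^sup>2 * q\<^sup>2 = q\<^sup>2 * (inverse q)\<^sup>2" by (simp add: eps_def)
  with assms show False by (simp add: power2_eq_square field_simps power4_eq_xxxx)
qed

lemma q_plus_inverse_nonzero: assumes "q \<noteq> 0" "q ^ 4 \<noteq> 1" shows "q + inverse q \<noteq> (0 :: 'k::field)"
proof
  assume "q + inverse q = 0"
  with assms(1) have "q\<^sup>2 = -1" by (simp add: power2_eq_square field_simps eq_neg_iff_add_eq_0)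
  then have "q ^ 4 = 1" by (simp add: power4_eq_xxxx power2_eq_square[symmetric])
  with assms(2) show False by simp
qed

lemma rep_aw_cent:
  assumes "fin_supp X" "fin_supp Y" "fin_supp Z" "fin_supp v"
  shows "rep q (aw_cent q X Y Z) v = rep q X v + smult (inverse (eps q))
     (smult q (rep q Y (rep q Z v)) - smult (inverse q) (rep q Z (rep q Y v)))"
  unfolding aw_cent_def fa_smult_eq eps_def[symmetric] using assms
  by (simp add: rep_add rep_diff rep_smult rep_mult)

lemma rep_aw_gABC:
  assumes q: "q \<noteq> 0" "q ^ 4 \<noteq> 1" and v: "fin_supp v"
  shows "rep q (aw_gA q) v = smult (inv_qsum q) (shift_vec (1, 0, 0) v)"
    and "rep q (aw_gB q) v = smult (inv_qsum q) (shift_vec (0, 1, 0) v)"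
    and "rep q (aw_gC q) v = smult (inv_qsum q) (shift_vec (0, 0, 1) v)"
  using eps_nonzero[OF q] q v
  by (simp_all add: aw_gA_def aw_gB_def aw_gC_def rep_aw_cent rep_aw_A rep_aw_B rep_aw_C
      opC_opB opC_opA opB_opA fun_eq_iff field_simps power2_eq_square)

lemma rep_aw_greek:
  assumes q: "q \<noteq> 0" "q ^ 4 \<noteq> 1" and v: "fin_supp v"
  shows "rep q (aw_alpha q) v = shift_vec (1, 0, 0) v"
    and "rep q (aw_beta q) v = shift_vec (0, 1, 0) v"
    and "rep q (aw_gamma q) v = shift_vec (0, 0, 1) v"
  using q_plus_inverse_nonzero[OF q]
  by (simp_all add: aw_alpha_def aw_beta_def aw_gamma_def fa_smult_eq rep_smult rep_aw_gABC[OF q v]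
      inv_qsum_def fun_eq_iff)

lemma rep_aw_rels:
  assumes q: "q \<noteq> 0" "q ^ 4 \<noteq> 1" and s: "s \<in> aw_rels q" and v: "fin_supp v"
  shows "rep q s v = 0"
proof -
  obtain X g where s: "s = fa_mult X g - fa_mult g X" and X: "X \<in> {aw_A, aw_B, aw_C}"
    and g: "g \<in> {aw_gA q, aw_gB q, aw_gC q}"
    using s unfolding aw_rels_def by blast
  have "rep q X (rep q g v) = rep q g (rep q X v)"
    using X g v
    by (auto simp: rep_aw_A rep_aw_B rep_aw_C rep_aw_gABC[OF q] op_smult op_shift_vec)
  with X g v show ?thesis unfolding s by (auto simp: rep_diff rep_mult)
qed

lemma rep_aw_ideal:
  assumes q: "q \<noteq> 0" "q ^ 4 \<noteq> 1" and x: "x \<in> aw_ideal q" and v: "fin_supp v"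
  shows "rep q x v = 0"
proof -
  have "fin_supp x \<and> rep q x v = 0"
  proof (rule fa_span_induct[where P = "\<lambda>x. fin_supp x \<and> rep q x v = 0"])
    show "x \<in> fa_span (ideal_gens q)" using x by (simp add: aw_ideal_eq_span)
  next
    fix c s y assume s: "s \<in> ideal_gens q" and y: "fin_supp y \<and> rep q y v = 0"
    obtain u r w where s_eq: "s = fa_mult (fa_mult (unit_vec u) r) (unit_vec w)" and r: "r \<in> aw_rels q"
      using s unfolding ideal_gens_def by blast
    have "rep q s v = 0"
      unfolding s_eq using fin_supp_aw_rels[OF r] v by (simp add: rep_mult rep_aw_rels[OF q r])
    with y fin_supp_ideal_gens[OF s] show "fin_supp (smult c s + y) \<and> rep q (smult c s + y) v = 0"
      by (simp add: rep_add rep_smult)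
  qed (simp add: rep_def)
  then show ?thesis ..
qed

lemma rep_pow_shift:
  assumes q: "q \<noteq> 0" "q ^ 4 \<noteq> 1"
  shows "rep q (fa_pow (aw_alpha q) n) (unit_vec (i, j, k, r, s, t)) = unit_vec (i, j, k, r + n, s, t)"
    and "rep q (fa_pow (aw_beta q) n) (unit_vec (i, j, k, r, s, t)) = unit_vec (i, j, k, r, s + n, t)"
    and "rep q (fa_pow (aw_gamma q) n) (unit_vec (i, j, k, r, s, t)) = unit_vec (i, j, k, r, s, t + n)"
  by (induction n) (auto simp: fa_word_eq rep_mult rep_aw_greek[OF q])

lemma rep_pow_letter:
  "rep q (fa_pow aw_A n) (unit_vec (i, j, k, r, s, t)) = unit_vec (i + n, j, k, r, s, t)"
  "rep q (fa_pow aw_B n) (unit_vec (0, j, k, r, s, t)) = unit_vec (0, j + n, k, r, s, t)"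
  "rep q (fa_pow aw_C n) (unit_vec (0, 0, k, r, s, t)) = unit_vec (0, 0, k + n, r, s, t)"
  by (induction n) (auto simp: fa_word_eq rep_mult rep_aw_A rep_aw_B rep_aw_C op_defs matB_0 matC_0_0)

lemma rep_aw_mon_unit_vec:
  assumes "q \<noteq> 0" "q ^ 4 \<noteq> 1"
  shows "rep q (aw_mon q m) (unit_vec (0, 0, 0, 0, 0, 0)) = unit_vec m"
  using assms by (cases m) (simp add: rep_mult rep_pow_letter rep_pow_shift)

lemma aw_mon_independent:
  assumes q: "q \<noteq> 0" "q ^ 4 \<noteq> 1" and M: "finite M"
    and I: "(\<Sum>m\<in>M. fa_smult (c m) (aw_mon q m)) \<in> aw_ideal q" and m0: "m0 \<in> M"
  shows "c m0 = 0"
proof -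
  let ?e = "unit_vec (0, 0, 0, 0, 0, 0) :: idx \<Rightarrow> 'a"
  have "(\<Sum>m\<in>M. smult (c m) (unit_vec m)) = rep q (\<Sum>m\<in>M. fa_smult (c m) (aw_mon q m)) ?e"
    unfolding fa_smult_eq by (simp add: rep_sum rep_smult rep_aw_mon_unit_vec[OF q])
  also have "\<dots> = 0"
    by (rule rep_aw_ideal[OF q I]) simp
  finally have "(\<Sum>m\<in>M. smult (c m) (unit_vec m)) m0 = 0" by simp
  moreover have "(\<Sum>m\<in>M. smult (c m) (unit_vec m)) m0 = (\<Sum>m\<in>M. if m0 = m then c m else 0)"
    unfolding sum_apply by (intro sum.cong) (auto simp: unit_vec_apply)
  ultimately show ?thesis using M m0 by (simp add: sum.delta)
qed

section \<open>Straightening words into ordered monomials\<close>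

lemma aw_mon_Suc_A: "aw_mon q (Suc i, j, k, r, s, t) = fa_mult aw_A (aw_mon q (i, j, k, r, s, t))"
  by (simp add: fa_mult_assoc)

lemma aw_mon_0:
  "aw_mon q (0, j, k, r, s, t) = fa_mult (fa_pow aw_B j) (fa_mult (fa_pow aw_C k)
     (fa_mult (fa_pow (aw_alpha q) r) (fa_mult (fa_pow (aw_beta q) s) (fa_pow (aw_gamma q) t))))"
  by (simp add: fa_word_eq fa_mult_one_left)

lemma aw_mon_Suc_B: "aw_mon q (0, Suc j, k, r, s, t) = fa_mult aw_B (aw_mon q (0, j, k, r, s, t))"
  unfolding aw_mon_0 by (simp add: fa_mult_assoc)

lemma aw_mon_Suc_C: "aw_mon q (0, 0, Suc k, r, s, t) = fa_mult aw_C (aw_mon q (0, 0, k, r, s, t))"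
  unfolding aw_mon_0 by (simp add: fa_word_eq fa_mult_one_left fa_mult_assoc)

lemma aw_mon_zero: "aw_mon q (0, 0, 0, 0, 0, 0) = unit_vec []"
  by (simp add: fa_word_eq fa_mult_one_left)

definition aw_elem :: "'k::field \<Rightarrow> (idx \<Rightarrow> 'k) \<Rightarrow> gen list \<Rightarrow> 'k" where
  "aw_elem q v = lin_ext (aw_mon q) v"

lemma aw_elem_unit_vec [simp]: "aw_elem q (unit_vec m) = aw_mon q m"
  by (simp add: aw_elem_def)

lemma aw_elem_add_diff_smult:
  "fin_supp u \<Longrightarrow> fin_supp v \<Longrightarrow> aw_elem q (u + v) = aw_elem q u + aw_elem q v"
  "fin_supp u \<Longrightarrow> fin_supp v \<Longrightarrow> aw_elem q (u - v) = aw_elem q u - aw_elem q v"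
  "aw_elem q (smult c v) = smult c (aw_elem q v)"
  by (simp_all add: aw_elem_def lin_ext_add lin_ext_diff lin_ext_smult)

lemma aw_A_mult_aw_elem: "fin_supp v \<Longrightarrow> fa_mult aw_A (aw_elem q v) = aw_elem q (opA v)"
proof -
  assume v: "fin_supp v"
  have "fa_mult aw_A (aw_elem q v) = lin_ext (\<lambda>m. fa_mult aw_A (aw_mon q m)) v"
    by (simp add: aw_elem_def fa_mult_lin_ext_right)
  also have "\<dots> = lin_ext (\<lambda>m. aw_elem q (matA m)) v"
  proof (rule lin_ext_cong)
    fix m :: idx
    show "fa_mult aw_A (aw_mon q m) = aw_elem q (matA m)"
      by (cases m) (simp only: matA.simps aw_elem_unit_vec aw_mon_Suc_A)
  qed
  also have "\<dots> = aw_elem q (opA v)"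
    using v by (simp add: aw_elem_def opA_def lin_ext_comp)
  finally show ?thesis .
qed

lemma aw_commutation:
  assumes "q \<noteq> 0" "q ^ 4 \<noteq> 1"
  shows "fa_mult aw_B aw_A =
      smult (q\<^sup>2) (fa_mult aw_A aw_B) + smult (q * eps q) aw_C - smult (q * eps q) (aw_gC q)"
    and "fa_mult aw_C aw_A =
      smult (inverse q ^ 2) (fa_mult aw_A aw_C) - smult (inverse q * eps q) aw_B + smult (inverse q * eps q) (aw_gB q)"
    and "fa_mult aw_C aw_B =
      smult (q\<^sup>2) (fa_mult aw_B aw_C) + smult (q * eps q) aw_A - smult (q * eps q) (aw_gA q)"
  unfolding aw_gA_def aw_gB_def aw_gC_def aw_cent_def fa_smult_eq eps_def[symmetric]
  using eps_nonzero[OF assms] assms by (simp_all add: fun_eq_iff field_simps power2_eq_square)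

lemma aw_g_mult_aw_mon:
  assumes q: "q \<noteq> 0" "q ^ 4 \<noteq> 1"
  shows "fa_mult (aw_gA q) (aw_mon q (i, j, k, r, s, t)) - smult (inv_qsum q) (aw_mon q (i, j, k, Suc r, s, t))
      \<in> aw_ideal q"
    and "fa_mult (aw_gB q) (aw_mon q (i, j, k, r, s, t)) - smult (inv_qsum q) (aw_mon q (i, j, k, r, Suc s, t))
      \<in> aw_ideal q"
    and "fa_mult (aw_gC q) (aw_mon q (i, j, k, r, s, t)) - smult (inv_qsum q) (aw_mon q (i, j, k, r, s, Suc t))
      \<in> aw_ideal q"
proof -
  have absorb: "fa_mult g (fa_mult (fa_pow (smult (q + inverse q) g) n) Y)
      = smult (inv_qsum q) (fa_mult (fa_pow (smult (q + inverse q) g) (Suc n)) Y)"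
    if "fin_supp g" "fin_supp Y" for g Y and n :: nat
    using that q_plus_inverse_nonzero[OF q]
    by (simp add: fa_mult_assoc fa_mult_smult_left inv_qsum_def fun_eq_iff)
  have absorb_last: "fa_mult g (fa_pow (smult (q + inverse q) g) n)
      = smult (inv_qsum q) (fa_pow (smult (q + inverse q) g) (Suc n))"
    if "fin_supp g" for g and n :: nat
    using that q_plus_inverse_nonzero[OF q]
    by (simp add: fa_mult_smult_left inv_qsum_def fun_eq_iff)
  have central: "central_mod q (aw_gA q)" "central_mod q (aw_gB q)" "central_mod q (aw_gC q)"
    by (simp_all add: central_mod_gABC)
  show "fa_mult (aw_gA q) (aw_mon q (i, j, k, r, s, t)) - smult (inv_qsum q) (aw_mon q (i, j, k, Suc r, s, t))
      \<in> aw_ideal q"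
    unfolding aw_mon.simps aw_alpha_def fa_smult_eq fa_mult_smult_right[symmetric]
    by (intro central_mod_mult_cong[OF central(1)]) (simp_all add: absorb fa_mult_smult_right)
  show "fa_mult (aw_gB q) (aw_mon q (i, j, k, r, s, t)) - smult (inv_qsum q) (aw_mon q (i, j, k, r, Suc s, t))
      \<in> aw_ideal q"
    unfolding aw_mon.simps aw_beta_def fa_smult_eq fa_mult_smult_right[symmetric]
    by (intro central_mod_mult_cong[OF central(2)]) (simp_all add: absorb fa_mult_smult_right)
  show "fa_mult (aw_gC q) (aw_mon q (i, j, k, r, s, t)) - smult (inv_qsum q) (aw_mon q (i, j, k, r, s, Suc t))
      \<in> aw_ideal q"
    unfolding aw_mon.simps aw_gamma_def fa_smult_eq fa_mult_smult_right[symmetric]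
    by (intro central_mod_mult_cong[OF central(3)]) (simp_all add: absorb_last fa_mult_smult_right)
qed

definition straightens :: "'k::field \<Rightarrow> (gen list \<Rightarrow> 'k) \<Rightarrow> (idx \<Rightarrow> idx \<Rightarrow> 'k) \<Rightarrow> idx \<Rightarrow> bool" where
  "straightens q X M m \<longleftrightarrow> fa_mult X (aw_mon q m) - aw_elem q (M m) \<in> aw_ideal q"

lemma straightens_lin_ext:
  assumes v: "fin_supp v" and st: "\<And>p. p \<in> supp v \<Longrightarrow> straightens q X M p"
    and M: "\<And>p. fin_supp (M p)"
  shows "fa_mult X (aw_elem q v) - aw_elem q (lin_ext M v) \<in> aw_ideal q"
proof -
  have "fa_mult X (aw_elem q v) - aw_elem q (lin_ext M v)
      = lin_ext (\<lambda>p. fa_mult X (aw_mon q p) - aw_elem q (M p)) v"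
    using v M by (simp add: aw_elem_def fa_mult_lin_ext_right lin_ext_comp lin_ext_fdiff)
  also have "\<dots> \<in> aw_ideal q"
    using st by (intro aw_ideal_lin_ext) (simp add: straightens_def)
  finally show ?thesis .
qed

lemma straightens_B_Suc:
  assumes q: "q \<noteq> 0" "q ^ 4 \<noteq> 1"
    and IB: "straightens q aw_B (matB q) (i, j, k, r, s, t)"
    and IC: "straightens q aw_C (matC q) (i, j, k, r, s, t)"
  shows "straightens q aw_B (matB q) (Suc i, j, k, r, s, t)"
proof -
  let ?m = "(i, j, k, r, s, t)" and ?e = "q * eps q"
  define X where "X = fa_mult aw_B (aw_mon q ?m)"
  define Y where "Y = aw_elem q (matB q ?m)"
  define Z where "Z = fa_mult aw_C (aw_mon q ?m)"
  define W where "W = aw_elem q (matC q ?m)"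
  define G where "G = fa_mult (aw_gC q) (aw_mon q ?m)"
  define H where "H = aw_mon q (i, j, k, r, s, Suc t)"
  have "fa_mult aw_B (aw_mon q (Suc i, j, k, r, s, t)) = fa_mult (fa_mult aw_B aw_A) (aw_mon q ?m)"
    unfolding aw_mon_Suc_A by (rule fa_mult_assoc[symmetric]) (simp_all only: fin_supp_aw_mon fin_supp_aw_gens)
  also have "\<dots> = smult (q\<^sup>2) (fa_mult aw_A X) + smult ?e Z - smult ?e G"
    unfolding aw_commutation(1)[OF q] X_def Z_def G_def
    by (simp add: fa_mult_add_left fa_mult_diff_left fa_mult_smult_left fa_mult_assoc)
  finally have lhs: "fa_mult aw_B (aw_mon q (Suc i, j, k, r, s, t)) = \<dots>" .
  have rhs: "aw_elem q (matB q (Suc i, j, k, r, s, t))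
      = smult (q\<^sup>2) (fa_mult aw_A Y) + smult ?e W - smult (?e * inv_qsum q) H"
    unfolding matB_Suc Y_def W_def H_def
    by (simp add: aw_elem_add_diff_smult aw_A_mult_aw_elem flip: opA_def)
  have "fa_mult aw_B (aw_mon q (Suc i, j, k, r, s, t)) - aw_elem q (matB q (Suc i, j, k, r, s, t))
      = smult (q\<^sup>2) (fa_mult aw_A (X - Y)) + smult ?e (Z - W) - smult ?e (G - smult (inv_qsum q) H)"
    unfolding lhs rhs fa_mult_diff_right by (simp add: fun_eq_iff algebra_simps)
  also have "\<dots> \<in> aw_ideal q"
  proof -
    have 1: "fa_mult aw_A (X - Y) \<in> aw_ideal q"
      using IB by (intro aw_ideal_mult(1)) (simp_all add: straightens_def X_def Y_def)
    have 2: "Z - W \<in> aw_ideal q" using IC by (simp add: straightens_def Z_def W_def)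
    have 3: "G - smult (inv_qsum q) H \<in> aw_ideal q"
      unfolding G_def H_def by (rule aw_g_mult_aw_mon(3)[OF q])
    show ?thesis
      by (rule aw_ideal_diff[OF aw_ideal_add[OF aw_ideal_smult[OF 1] aw_ideal_smult[OF 2]] aw_ideal_smult[OF 3]])
  qed
  finally show ?thesis by (simp add: straightens_def)
qed

lemma straightens_C_Suc:
  assumes q: "q \<noteq> 0" "q ^ 4 \<noteq> 1"
    and IB: "straightens q aw_B (matB q) (i, j, k, r, s, t)"
    and IC: "straightens q aw_C (matC q) (i, j, k, r, s, t)"
  shows "straightens q aw_C (matC q) (Suc i, j, k, r, s, t)"
proof -
  let ?m = "(i, j, k, r, s, t)" and ?e = "inverse q * eps q"
  define X where "X = fa_mult aw_B (aw_mon q ?m)"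
  define Y where "Y = aw_elem q (matB q ?m)"
  define Z where "Z = fa_mult aw_C (aw_mon q ?m)"
  define W where "W = aw_elem q (matC q ?m)"
  define G where "G = fa_mult (aw_gB q) (aw_mon q ?m)"
  define H where "H = aw_mon q (i, j, k, r, Suc s, t)"
  have "fa_mult aw_C (aw_mon q (Suc i, j, k, r, s, t)) = fa_mult (fa_mult aw_C aw_A) (aw_mon q ?m)"
    unfolding aw_mon_Suc_A by (rule fa_mult_assoc[symmetric]) (simp_all only: fin_supp_aw_mon fin_supp_aw_gens)
  also have "\<dots> = smult (inverse q ^ 2) (fa_mult aw_A Z) - smult ?e X + smult ?e G"
    unfolding aw_commutation(2)[OF q] X_def Z_def G_def
    by (simp add: fa_mult_add_left fa_mult_diff_left fa_mult_smult_left fa_mult_assoc)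
  finally have lhs: "fa_mult aw_C (aw_mon q (Suc i, j, k, r, s, t)) = \<dots>" .
  have rhs: "aw_elem q (matC q (Suc i, j, k, r, s, t))
      = smult (inverse q ^ 2) (fa_mult aw_A W) - smult ?e Y + smult (?e * inv_qsum q) H"
    unfolding matC_Suc Y_def W_def H_def
    by (simp add: aw_elem_add_diff_smult aw_A_mult_aw_elem flip: opA_def)
  have "fa_mult aw_C (aw_mon q (Suc i, j, k, r, s, t)) - aw_elem q (matC q (Suc i, j, k, r, s, t))
      = smult (inverse q ^ 2) (fa_mult aw_A (Z - W)) - smult ?e (X - Y) + smult ?e (G - smult (inv_qsum q) H)"
    unfolding lhs rhs fa_mult_diff_right by (simp add: fun_eq_iff algebra_simps)
  also have "\<dots> \<in> aw_ideal q"
  proof -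
    have 1: "fa_mult aw_A (Z - W) \<in> aw_ideal q"
      using IC by (intro aw_ideal_mult(1)) (simp_all add: straightens_def Z_def W_def)
    have 2: "X - Y \<in> aw_ideal q" using IB by (simp add: straightens_def X_def Y_def)
    have 3: "G - smult (inv_qsum q) H \<in> aw_ideal q"
      unfolding G_def H_def by (rule aw_g_mult_aw_mon(2)[OF q])
    show ?thesis
      by (rule aw_ideal_add[OF aw_ideal_diff[OF aw_ideal_smult[OF 1] aw_ideal_smult[OF 2]] aw_ideal_smult[OF 3]])
  qed
  finally show ?thesis by (simp add: straightens_def)
qed

lemma straightens_C_0_Suc:
  assumes q: "q \<noteq> 0" "q ^ 4 \<noteq> 1"
    and IC: "straightens q aw_C (matC q) (0, j, k, r, s, t)"
    and IB: "\<And>p. p \<in> supp (matC q (0, j, k, r, s, t)) \<Longrightarrow> straightens q aw_B (matB q) p"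
  shows "straightens q aw_C (matC q) (0, Suc j, k, r, s, t)"
proof -
  let ?m = "(0::nat, j, k, r, s, t)" and ?e = "q * eps q"
  define Z where "Z = fa_mult aw_C (aw_mon q ?m)"
  define W where "W = aw_elem q (matC q ?m)"
  define V where "V = aw_elem q (opB q (matC q ?m))"
  define G where "G = fa_mult (aw_gA q) (aw_mon q ?m)"
  define H where "H = aw_mon q (0, j, k, Suc r, s, t)"
  define K where "K = aw_mon q (1, j, k, r, s, t)"
  have "fa_mult aw_C (aw_mon q (0, Suc j, k, r, s, t)) = fa_mult (fa_mult aw_C aw_B) (aw_mon q ?m)"
    unfolding aw_mon_Suc_B by (rule fa_mult_assoc[symmetric]) (simp_all only: fin_supp_aw_mon fin_supp_aw_gens)
  also have "\<dots> = smult (q\<^sup>2) (fa_mult aw_B Z) + smult ?e K - smult ?e G"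
    unfolding aw_commutation(3)[OF q] Z_def G_def K_def One_nat_def aw_mon_Suc_A
    by (simp add: fa_mult_add_left fa_mult_diff_left fa_mult_smult_left fa_mult_assoc del: aw_mon.simps)
  finally have lhs: "fa_mult aw_C (aw_mon q (0, Suc j, k, r, s, t)) = \<dots>" .
  have rhs: "aw_elem q (matC q (0, Suc j, k, r, s, t)) = smult (q\<^sup>2) V + smult ?e K - smult (?e * inv_qsum q) H"
    unfolding matC_0_Suc V_def H_def K_def
    by (simp add: aw_elem_add_diff_smult flip: opB_def)
  have "fa_mult aw_C (aw_mon q (0, Suc j, k, r, s, t)) - aw_elem q (matC q (0, Suc j, k, r, s, t))
      = smult (q\<^sup>2) (fa_mult aw_B (Z - W) + (fa_mult aw_B W - V)) - smult ?e (G - smult (inv_qsum q) H)"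
    unfolding lhs rhs fa_mult_diff_right by (simp add: fun_eq_iff algebra_simps)
  also have "\<dots> \<in> aw_ideal q"
  proof -
    have 1: "fa_mult aw_B (Z - W) \<in> aw_ideal q"
      using IC by (intro aw_ideal_mult(1)) (simp_all add: straightens_def Z_def W_def)
    have 2: "fa_mult aw_B W - V \<in> aw_ideal q"
      unfolding W_def V_def opB_def using IB by (intro straightens_lin_ext) auto
    have 3: "G - smult (inv_qsum q) H \<in> aw_ideal q"
      unfolding G_def H_def by (rule aw_g_mult_aw_mon(1)[OF q])
    show ?thesis
      by (rule aw_ideal_diff[OF aw_ideal_smult[OF aw_ideal_add[OF 1 2]] aw_ideal_smult[OF 3]])
  qed
  finally show ?thesis by (simp add: straightens_def)
qed

lemma straightens_0:
  "straightens q aw_B (matB q) (0, j, k, r, s, t)"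
  "straightens q aw_C (matC q) (0, 0, k, r, s, t)"
  by (simp_all add: straightens_def matB_0 matC_0_0 aw_mon_Suc_B aw_mon_Suc_C del: aw_mon.simps)

text \<open>\<open>C\<close> at \<open>(0, j+1, \<dots>)\<close> is straightened using \<open>B\<close> at the same degree \<open>i+j+k\<close>,
  hence the interleaved measures \<open>2 (i+j+k) + 1\<close> for \<open>B\<close> and \<open>2 (i+j+k) + 2\<close> for \<open>C\<close>.\<close>

lemma straightens_bounded:
  assumes q: "q \<noteq> 0" "q ^ 4 \<noteq> 1"
  shows "(\<forall>m. 2 * abc_deg m + 1 \<le> n \<longrightarrow> straightens q aw_B (matB q) m) \<and>
         (\<forall>m. 2 * abc_deg m + 2 \<le> n \<longrightarrow> straightens q aw_C (matC q) m)"
proof (induction n)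
  case (Suc n)
  have IB: "\<And>m. 2 * abc_deg m + 1 \<le> n \<Longrightarrow> straightens q aw_B (matB q) m"
    and IC: "\<And>m. 2 * abc_deg m + 2 \<le> n \<Longrightarrow> straightens q aw_C (matC q) m"
    using Suc.IH by blast+
  have "straightens q aw_B (matB q) m" if "2 * abc_deg m + 1 \<le> Suc n" for m
  proof -
    obtain i j k r s t where m: "m = (i, j, k, r, s, t)" by (cases m) auto
    show ?thesis
    proof (cases i)
      case 0
      then show ?thesis by (simp add: m straightens_0)
    next
      case (Suc i')
      have "straightens q aw_B (matB q) (i', j, k, r, s, t)" "straightens q aw_C (matC q) (i', j, k, r, s, t)"
        using that m Suc by (intro IB IC, simp)+
      then show ?thesis unfolding m Suc by (rule straightens_B_Suc[OF q])
    qed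
  qed
  moreover have "straightens q aw_C (matC q) m" if m_deg: "2 * abc_deg m + 2 \<le> Suc n" for m
  proof -
    obtain i j k r s t where m: "m = (i, j, k, r, s, t)" by (cases m) auto
    consider "i = 0" "j = 0" | j' where "i = 0" "j = Suc j'" | i' where "i = Suc i'"
      by (cases i; cases j) auto
    then show ?thesis
    proof cases
      case 1
      then show ?thesis by (simp add: m straightens_0)
    next
      case (2 j')
      have "straightens q aw_B (matB q) p" if "p \<in> supp (matC q (0, j', k, r, s, t))" for p
      proof (rule IB)
        have "abc_deg p \<le> Suc (abc_deg (0::nat, j', k, r, s, t))"
          using that matC_deg_bounded[of q "(0, j', k, r, s, t)"] by (simp add: deg_bounded_def)
        then show "2 * abc_deg p + 1 \<le> n" using m_deg m 2 by simp
      qed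
      moreover have "straightens q aw_C (matC q) (0, j', k, r, s, t)"
        using m_deg m 2 by (intro IC) simp
      ultimately show ?thesis unfolding m 2 by (intro straightens_C_0_Suc[OF q])
    next
      case (3 i')
      have "straightens q aw_B (matB q) (i', j, k, r, s, t)" "straightens q aw_C (matC q) (i', j, k, r, s, t)"
        using m_deg m 3 by (intro IB IC, simp)+
      then show ?thesis unfolding m 3 by (rule straightens_C_Suc[OF q])
    qed
  qed
  ultimately show ?case by blast
qed simp

lemma straightens_all:
  assumes "q \<noteq> 0" "q ^ 4 \<noteq> 1"
  shows "straightens q aw_B (matB q) m" and "straightens q aw_C (matC q) m"
proof -
  have "2 * abc_deg m + 1 \<le> 2 * abc_deg m + 2" by simp
  then show "straightens q aw_B (matB q) m" "straightens q aw_C (matC q) m"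
    using straightens_bounded[OF assms, of "2 * abc_deg m + 2"] by blast+
qed

lemma word_straightens:
  assumes q: "q \<noteq> 0" "q ^ 4 \<noteq> 1"
  shows "unit_vec w - aw_elem q (rep_word q w (unit_vec (0, 0, 0, 0, 0, 0))) \<in> aw_ideal q"
proof (induction w)
  case Nil
  show ?case by (simp add: aw_mon_zero del: aw_mon.simps)
next
  case (Cons a w)
  let ?y = "rep_word q w (unit_vec (0, 0, 0, 0, 0, 0))"
  have letter: "fa_mult (unit_vec [a]) (aw_elem q ?y) - aw_elem q (lin_ext (mat_gen q a) ?y) \<in> aw_ideal q"
  proof (cases a)
    case GA
    then show ?thesis by (simp add: aw_A_eq[symmetric] aw_A_mult_aw_elem opA_def)
  next
    case GB
    then show ?thesis
      using straightens_all(1)[OF q] by (simp add: aw_B_eq[symmetric] straightens_lin_ext)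
  next
    case GC
    then show ?thesis
      using straightens_all(2)[OF q] by (simp add: aw_C_eq[symmetric] straightens_lin_ext)
  qed
  have "unit_vec (a # w) - aw_elem q (rep_word q (a # w) (unit_vec (0, 0, 0, 0, 0, 0)))
     = fa_mult (unit_vec [a]) (unit_vec w - aw_elem q ?y)
       + (fa_mult (unit_vec [a]) (aw_elem q ?y) - aw_elem q (lin_ext (mat_gen q a) ?y))"
    by (simp add: fa_mult_diff_right fa_mult_unit_vec fun_eq_iff)
  also have "\<dots> \<in> aw_ideal q"
    by (rule aw_ideal_add[OF aw_ideal_mult(1)[OF fin_supp_unit_vec Cons.IH] letter])
  finally show ?case .
qed

lemma aw_mon_spanning:
  assumes q: "q \<noteq> 0" "q ^ 4 \<noteq> 1" and f: "fin_supp f"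
  shows "f - aw_elem q (rep q f (unit_vec (0, 0, 0, 0, 0, 0))) \<in> aw_ideal q"
proof -
  let ?e = "unit_vec (0, 0, 0, 0, 0, 0)"
  have "f - aw_elem q (rep q f ?e) = lin_ext (\<lambda>w. unit_vec w - aw_elem q (rep_word q w ?e)) f"
    using f by (simp add: lin_ext_unit_vec_id rep_def aw_elem_def lin_ext_comp lin_ext_fdiff)
  also have "\<dots> \<in> aw_ideal q"
    by (intro aw_ideal_lin_ext word_straightens[OF q])
  finally show ?thesis .
qed

theorem theorem4p1:
  fixes q :: "'k::field"
  assumes "q \<noteq> 0" and "q ^ 4 \<noteq> 1"
  shows "quotient_basis (aw_ideal q) (aw_mon q)"
  unfolding quotient_basis_def
proof (intro conjI allI ballI impI)
  fix f :: "gen list \<Rightarrow> 'k" assume "f \<in> fa_fin"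
  then have f: "fin_supp f" by (simp add: fa_fin_eq)
  let ?v = "rep q f (unit_vec (0, 0, 0, 0, 0, 0))"
  have "finite (supp ?v)" using f by (simp add: fin_supp_def[symmetric])
  moreover have "f - (\<Sum>m\<in>supp ?v. fa_smult (?v m) (aw_mon q m)) \<in> aw_ideal q"
    using aw_mon_spanning[OF assms f] by (simp add: aw_elem_def fa_smult_eq lin_ext_as_sum)
  ultimately show "\<exists>M c. finite M \<and> f - (\<Sum>m\<in>M. fa_smult (c m) (aw_mon q m)) \<in> aw_ideal q"
    by blast
next
  fix M and c :: "idx \<Rightarrow> 'k" and m
  assume "finite M \<and> (\<Sum>m\<in>M. fa_smult (c m) (aw_mon q m)) \<in> aw_ideal q" and "m \<in> M"
  then show "c m = 0" using aw_mon_independent[OF assms] by blast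
qed

end
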